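(* Let $R$ be a localizable partially ordered commutative ring with $\mathbb{N}\subseteq\mathrm{Loc}(R)$. Then $\mathcal{K}(R)$ is a compact Hausdorff space and $\{r\in R : \widehat r\in \mathscr{C}_\approx(\mathcal{D}_{\mathrm{loc}}(R))^+\} = (R^+)^\ddagger$, where $(R^+)^\ddagger=\{g\in R: \text{there is } h\in R \text{ with } kg+h\in R^+ \text{ for all } k\in\mathbb{N}\}$.
   Context: All rings are commutative with unit $1$; ring morphisms are unital. A partially ordered commutative ring is a commutative ring $R$ with a partial order $\le$ such that $r\le s$ implies $r+t\le s+t$, and whose positive cone $R^+=\{r:0\le r\}$ is closed under multiplication and contains all squares. $\mathbb{N}=\{1,2,\dots\}$, $\mathbb{N}_0=\mathbb{N}\cup\{0\}$. $\mathrm{Loc}(R)$ is the set of $s\in 1+R^+$ such that for all $r\in R$, $rs\in R^+$ implies $r\in R^+$; $R$ is localizable if for every $r\in R$ there is $s\in\mathrm{Loc}(R)$ with $-s\le r\le s$. ($\mathbb{N}\subseteq\mathrm{Loc}(R)$ means the elements $n\cdot1$ lie in $\mathrm{Loc}(R)$.) Admissible domains: for a topological space $Y$, an admissible set of domains is a set $\mathcal{D}$ of open subsets of $Y$ with $Y\in\mathcal{D}$, closed under finite intersections. On $\bigcup_{A\in\mathcal{D}}\mathscr{C}(A)$ define $f+g,fg$ pointwise on $\operatorname{dom}f\cap\operatorname{dom}g$; $f\approx g$ iff $f|_A=g|_A$ for some $A\in\mathcal{D}$, $A\subseteq\operatorname{dom}f\cap\operatorname{dom}g$. The quotient $\mathscr{C}_\approx(\mathcal{D})$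 is a partially ordered commutative ring with $[f]\ge 0$ iff $f|_A\ge0$ pointwise for some $A\in\mathcal{D}$, $A\subseteq\operatorname{dom}f$. Localization: $R_{\mathrm{loc}}$ consists of fractions $r/s$ ($r\in R$, $s\in\mathrm{Loc}(R)$), $r/s=r'/s'$ iff $rs'=r's$, usual operations, ordered by $p/q\le r/s$ iff $ps\le rq$. $R^{\mathrm{bd}}_{\mathrm{loc}}=\{a\in R_{\mathrm{loc}}:\exists n\in\mathbb{N}_0,\ -n\le a\le n\}$ (a subring). $\mathcal{K}(R)$ is the set of ring morphisms $\varphi\colon R^{\mathrm{bd}}_{\mathrm{loc}}\to\mathbb{R}$ with $\varphi(a)\ge 0$ whenever $a\ge0$, with the weak-$*$ topology (generated by $\{\varphi:\varphi(a)\in V\}$, $a\in R^{\mathrm{bd}}_{\mathrm{loc}}$, $V\subseteq\mathbb{R}$ open). For $s\in\mathrm{Loc}(R)$, $\mathrm{O}_{s<\infty}=\{\varphi:\varphi(1/s)>0\}$; $\mathcal{D}_{\mathrm{loc}}(R)=\{\mathrm{O}_{s<\infty}:s\in\mathrm{Loc}(R)\}$ is admissible. The extended Gelfand transformation sends $r\in R$ to $\widehat r$, the class of $r_s\colon\mathrm{O}_{s<\infty}\to\mathbb{R}$, $\varphi\mapsto\varphi(1/s)^{-1}\varphi(r/s)$, for any $s\in\mathrm{Loc}(R)$ with $r/s\in R^{\mathrm{bd}}_{\mathrm{loc}}$ (independent of $s$). *)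

theory Defs
  imports "HOL-Analysis.Analysis"
begin

definition po_comm_ring :: "('a::comm_ring_1 \<Rightarrow> 'a \<Rightarrow> bool) \<Rightarrow> bool" where
  "po_comm_ring le \<longleftrightarrow>
     (\<forall>r. le r r) \<and>
     (\<forall>r s. le r s \<and> le s r \<longrightarrow> r = s) \<and>
     (\<forall>r s t. le r s \<and> le s t \<longrightarrow> le r t) \<and>
     (\<forall>r s t. le r s \<longrightarrow> le (r + t) (s + t)) \<and>
     (\<forall>r s. le 0 r \<and> le 0 s \<longrightarrow> le 0 (r * s)) \<and>
     (\<forall>r. le 0 (r * r))"

definition Loc :: "('a::comm_ring_1 \<Rightarrow> 'a \<Rightarrow> bool) \<Rightarrow> 'a set" where
  "Loc le = {s. le 0 (s - 1) \<and> (\<forall>r. le 0 (r * s) \<longrightarrow> le 0 r)}"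

definition localizable :: "('a::comm_ring_1 \<Rightarrow> 'a \<Rightarrow> bool) \<Rightarrow> bool" where
  "localizable le \<longleftrightarrow> (\<forall>r. \<exists>s\<in>Loc le. le (- s) r \<and> le r s)"

text \<open>Fractions r/s are represented by pairs (r, s) with s in Loc(R).
  The ordering p/q \<le> r/s iff p s \<le> r q.\<close>
definition frac_le :: "('a::comm_ring_1 \<Rightarrow> 'a \<Rightarrow> bool) \<Rightarrow> 'a \<times> 'a \<Rightarrow> 'a \<times> 'a \<Rightarrow> bool" where
  "frac_le le x y \<longleftrightarrow> le (fst x * snd y) (fst y * snd x)"

definition frac_eq :: "'a::comm_ring_1 \<times> 'a \<Rightarrow> 'a \<times> 'a \<Rightarrow> bool" where
  "frac_eq x y \<longleftrightarrow> fst x * snd y = fst y * snd x"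

definition frac_add :: "'a::comm_ring_1 \<times> 'a \<Rightarrow> 'a \<times> 'a \<Rightarrow> 'a \<times> 'a" where
  "frac_add x y = (fst x * snd y + fst y * snd x, snd x * snd y)"

definition frac_mul :: "'a::comm_ring_1 \<times> 'a \<Rightarrow> 'a \<times> 'a \<Rightarrow> 'a \<times> 'a" where
  "frac_mul x y = (fst x * fst y, snd x * snd y)"

text \<open>Representatives of elements of the bounded part R^bd_loc:
  -n \<le> r/s \<le> n for some n in N_0 (with n identified with n/1).\<close>
definition Bd :: "('a::comm_ring_1 \<Rightarrow> 'a \<Rightarrow> bool) \<Rightarrow> ('a \<times> 'a) set" where
  "Bd le = {x. snd x \<in> Loc le \<and>
      (\<exists>n::nat. frac_le le (- of_nat n, 1) x \<and> frac_le le x (of_nat n, 1))}"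

text \<open>K(R): positive ring morphisms R^bd_loc \<rightarrow> real, represented as functions on
  representatives that respect equality of fractions and vanish off Bd.\<close>
definition Kset :: "('a::comm_ring_1 \<Rightarrow> 'a \<Rightarrow> bool) \<Rightarrow> ('a \<times> 'a \<Rightarrow> real) set" where
  "Kset le = {\<phi>.
      (\<forall>x. x \<notin> Bd le \<longrightarrow> \<phi> x = 0) \<and>
      (\<forall>x\<in>Bd le. \<forall>y\<in>Bd le. frac_eq x y \<longrightarrow> \<phi> x = \<phi> y) \<and>
      \<phi> (1, 1) = 1 \<and>
      (\<forall>x\<in>Bd le. \<forall>y\<in>Bd le. \<phi> (frac_add x y) = \<phi> x + \<phi> y) \<and>
      (\<forall>x\<in>Bd le. \<forall>y\<in>Bd le. \<phi> (frac_mul x y) = \<phi> x * \<phi> y) \<and>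
      (\<forall>x\<in>Bd le. frac_le le (0, 1) x \<longrightarrow> \<phi> x \<ge> 0)}"

definition Ktop :: "('a::comm_ring_1 \<Rightarrow> 'a \<Rightarrow> bool) \<Rightarrow> ('a \<times> 'a \<Rightarrow> real) topology" where
  "Ktop le = topology_generated_by
     {{\<phi> \<in> Kset le. \<phi> x \<in> V} | x V. x \<in> Bd le \<and> open V}"

definition Ofin :: "('a::comm_ring_1 \<Rightarrow> 'a \<Rightarrow> bool) \<Rightarrow> 'a \<Rightarrow> ('a \<times> 'a \<Rightarrow> real) set" where
  "Ofin le s = {\<phi> \<in> Kset le. \<phi> (1, s) > 0}"

definition Dloc :: "('a::comm_ring_1 \<Rightarrow> 'a \<Rightarrow> bool) \<Rightarrow> ('a \<times> 'a \<Rightarrow> real) set set" where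
  "Dloc le = {Ofin le s | s. s \<in> Loc le}"

text \<open>Positivity in C_\<approx>(D): the class of f (with domain B) is \<ge> 0 iff
  f is pointwise \<ge> 0 on some A in D with A \<subseteq> B.\<close>
definition C_approx_nonneg :: "'x set set \<Rightarrow> 'x set \<Rightarrow> ('x \<Rightarrow> real) \<Rightarrow> bool" where
  "C_approx_nonneg D B f \<longleftrightarrow> (\<exists>A\<in>D. A \<subseteq> B \<and> (\<forall>x\<in>A. f x \<ge> 0))"

text \<open>The extended Gelfand transform of r is the class of
  r_s : O_{s<\<infinity>} \<rightarrow> real, \<phi> \<mapsto> \<phi>(1/s)^{-1} \<phi>(r/s), for a chosen s in Loc(R)
  with r/s bounded (the class is independent of this choice).\<close>
definition gelfand_s :: "('a::comm_ring_1 \<Rightarrow> 'a \<Rightarrow> bool) \<Rightarrow> 'a \<Rightarrow> 'a" where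
  "gelfand_s le r = (SOME s. s \<in> Loc le \<and> (r, s) \<in> Bd le)"

definition gelfand_fun :: "('a::comm_ring_1 \<Rightarrow> 'a \<Rightarrow> bool) \<Rightarrow> 'a \<Rightarrow> 'a \<Rightarrow> ('a \<times> 'a \<Rightarrow> real) \<Rightarrow> real" where
  "gelfand_fun le r s = (\<lambda>\<phi>. inverse (\<phi> (1, s)) * \<phi> (r, s))"

definition gelfand_nonneg :: "('a::comm_ring_1 \<Rightarrow> 'a \<Rightarrow> bool) \<Rightarrow> 'a \<Rightarrow> bool" where
  "gelfand_nonneg le r \<longleftrightarrow>
     C_approx_nonneg (Dloc le) (Ofin le (gelfand_s le r)) (gelfand_fun le r (gelfand_s le r))"

definition ddagger_pos :: "('a::comm_ring_1 \<Rightarrow> 'a \<Rightarrow> bool) \<Rightarrow> 'a set" where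
  "ddagger_pos le = {g. \<exists>h. \<forall>k::nat. k \<ge> 1 \<longrightarrow> le 0 (of_nat k * g + h)}"

end

theory Submission
  imports Defs
begin

(* The weak-* topology on K(R) is the subspace topology of the product topology on all
   real-valued functions of fractions.  K(R) is cut out by closed conditions and every
   coordinate is bounded on it, so it is compact by Tychonoff, and it is Hausdorff.

   The Gelfand transform of r is nonnegative on a domain O_{t<oo} iff phi(r/s) phi(1/t) >= 0 for
   all characters phi.  If k r + h >= 0 for all k, with -t <= h <= t, then
   k phi(r/s) phi(1/t) + phi(1/s) phi(h/t) >= 0 for all k, which gives this for O_{st<oo}.
   Conversely one needs a representation theorem of Kadison-Dubois type: if phi(r/u) >= 0 for
   all characters phi, then n r + u >= 0 for all n >= 1.  Otherwise, by the Archimedean property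
   of bounded fractions, -(r/u + 1/n) generates a preordering not containing -1.  A maximal such
   preordering (Zorn) is total, so comparing fractions with the rationals defines Dedekind cuts,
   and the resulting character is negative at r/u + 1/n. *)

definition frac_neg :: "'a::comm_ring_1 \<times> 'a \<Rightarrow> 'a \<times> 'a" where
  "frac_neg x = (- fst x, snd x)"

definition frac_diff :: "'a::comm_ring_1 \<times> 'a \<Rightarrow> 'a \<times> 'a \<Rightarrow> 'a \<times> 'a" where
  "frac_diff x y = frac_add x (frac_neg y)"

definition frac_of_rat :: "rat \<Rightarrow> 'a::comm_ring_1 \<times> 'a" where
  "frac_of_rat q = map_prod of_int of_int (quotient_of q)"

lemma frac_eq_refl: "frac_eq x x"
  by (simp add: frac_eq_def)

lemma frac_eq_sym: "frac_eq x y \<Longrightarrow> frac_eq y x"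
  by (simp add: frac_eq_def)

lemma frac_eq_add:
  assumes "frac_eq x x'" "frac_eq y y'"
  shows "frac_eq (frac_add x y) (frac_add x' y')"
proof -
  have "(fst x * snd y + fst y * snd x) * (snd x' * snd y') =
        (fst x * snd x') * (snd y * snd y') + (fst y * snd y') * (snd x * snd x')"
    by (simp add: algebra_simps)
  also have "\<dots> = (fst x' * snd x) * (snd y * snd y') + (fst y' * snd y) * (snd x * snd x')"
    using assms by (simp add: frac_eq_def)
  also have "\<dots> = (fst x' * snd y' + fst y' * snd x') * (snd x * snd y)"
    by (simp add: algebra_simps)
  finally show ?thesis by (simp add: frac_eq_def frac_add_def)
qed

lemma frac_eq_mul:
  assumes "frac_eq x x'" "frac_eq y y'"
  shows "frac_eq (frac_mul x y) (frac_mul x' y')"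
proof -
  have "(fst x * fst y) * (snd x' * snd y') = (fst x * snd x') * (fst y * snd y')"
    by (simp add: algebra_simps)
  also have "\<dots> = (fst x' * snd x) * (fst y' * snd y)"
    using assms by (simp add: frac_eq_def)
  finally show ?thesis by (simp add: frac_eq_def frac_mul_def algebra_simps)
qed

lemma frac_eq_neg: "frac_eq x y \<Longrightarrow> frac_eq (frac_neg x) (frac_neg y)"
  by (simp add: frac_eq_def frac_neg_def)

lemma frac_eq_diff: "frac_eq x x' \<Longrightarrow> frac_eq y y' \<Longrightarrow> frac_eq (frac_diff x y) (frac_diff x' y')"
  unfolding frac_diff_def by (intro frac_eq_add frac_eq_neg)

lemma frac_diff_zero [simp]: "frac_diff x (0, 1) = x"
  by (simp add: frac_diff_def frac_add_def frac_neg_def)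

lemma frac_neg_diff: "frac_eq (frac_neg (frac_diff x y)) (frac_diff y x)"
  by (simp add: frac_eq_def frac_diff_def frac_add_def frac_neg_def algebra_simps)

lemma frac_add_affine:
  "frac_eq (frac_add (frac_add a (frac_mul x b)) (frac_add c (frac_mul x d)))
    (frac_add (frac_add a c) (frac_mul x (frac_add b d)))"
  by (simp add: frac_eq_def frac_add_def frac_mul_def algebra_simps)

lemma frac_mul_affine:
  "frac_eq (frac_mul (frac_add a (frac_mul x b)) (frac_add c (frac_mul x d)))
    (frac_add (frac_add (frac_mul a c) (frac_mul (frac_mul x x) (frac_mul b d)))
      (frac_mul x (frac_add (frac_mul a d) (frac_mul c b))))"
  by (simp add: frac_eq_def frac_add_def frac_mul_def algebra_simps)

text \<open>Multiplying \<open>-1 - a1 = x b1\<close> and \<open>-1 - a2 = -x b2\<close> gives \<open>(1 + a1)(1 + a2) = -x\<^sup>2 b1 b2\<close>.\<close>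

lemma frac_eq_minus_one_both_signs:
  assumes "frac_eq (- 1, 1) (frac_add a1 (frac_mul x b1))"
    and "frac_eq (- 1, 1) (frac_add a2 (frac_mul (frac_neg x) b2))"
  shows "frac_eq (- 1, 1)
    (frac_add (frac_add a1 a2) (frac_add (frac_mul a1 a2) (frac_mul (frac_mul x x) (frac_mul b1 b2))))"
proof -
  obtain \<alpha>1 \<sigma>1 \<beta>1 \<rho>1 \<alpha>2 \<sigma>2 \<beta>2 \<rho>2 \<xi> \<tau> where
    p: "a1 = (\<alpha>1, \<sigma>1)" "b1 = (\<beta>1, \<rho>1)" "a2 = (\<alpha>2, \<sigma>2)" "b2 = (\<beta>2, \<rho>2)" "x = (\<xi>, \<tau>)"
    by (metis prod.exhaust)
  from assms have h1: "\<xi> * \<beta>1 * \<sigma>1 = - ((\<sigma>1 + \<alpha>1) * (\<tau> * \<rho>1))"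
    and h2: "\<xi> * \<beta>2 * \<sigma>2 = (\<sigma>2 + \<alpha>2) * (\<tau> * \<rho>2)"
    unfolding p frac_eq_def frac_add_def frac_mul_def frac_neg_def by (simp_all add: algebra_simps)
  have "(\<alpha>1 * \<sigma>2 + \<alpha>2 * \<sigma>1) * (\<sigma>1 * \<sigma>2 * (\<tau> * \<tau> * (\<rho>1 * \<rho>2))) +
        (\<alpha>1 * \<alpha>2 * (\<tau> * \<tau> * (\<rho>1 * \<rho>2)) + \<xi> * \<xi> * (\<beta>1 * \<beta>2) * (\<sigma>1 * \<sigma>2)) * (\<sigma>1 * \<sigma>2)
      = \<sigma>1 * \<sigma>2 * ((\<alpha>1 * \<sigma>2 + \<alpha>2 * \<sigma>1) * (\<tau> * \<tau> * (\<rho>1 * \<rho>2)) + \<alpha>1 * \<alpha>2 * (\<tau> * \<tau> * (\<rho>1 * \<rho>2))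
           + (\<xi> * \<beta>1 * \<sigma>1) * (\<xi> * \<beta>2 * \<sigma>2))"
    by (simp add: algebra_simps)
  also have "\<dots> = - (\<sigma>1 * \<sigma>2 * (\<sigma>1 * \<sigma>2 * (\<tau> * \<tau> * (\<rho>1 * \<rho>2))))"
    unfolding h1 h2 by (simp add: algebra_simps)
  finally show ?thesis
    unfolding p frac_eq_def frac_add_def frac_mul_def by simp
qed

lemma frac_of_rat_cases:
  obtains a b where "b > 0" "q = of_int a / of_int b" "frac_of_rat q = (of_int a, of_int b)"
proof -
  obtain a b where q: "quotient_of q = (a, b)"
    by (cases "quotient_of q")
  show thesis
  proof (rule that)
    show "b > 0" by (rule quotient_of_denom_pos[OF q])
    show "q = of_int a / of_int b" by (rule quotient_of_div[OF q])
    show "frac_of_rat q = (of_int a, of_int b)" by (simp add: frac_of_rat_def q)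
  qed
qed

lemma frac_of_rat_eq_quotient:
  assumes "b > 0" "q = of_int a / of_int b"
  shows "frac_eq (frac_of_rat q) (of_int a, of_int b)"
proof -
  obtain a' b' where b': "b' > 0" "q = of_int a' / of_int b'"
    and rep: "frac_of_rat q = (of_int a', of_int b' :: 'a)"
    by (rule frac_of_rat_cases)
  have "(of_int (a' * b) :: rat) = of_int (a * b')"
    using assms b' by (simp add: field_simps)
  then have "a' * b = a * b'"
    by (simp only: of_int_eq_iff)
  then have "(of_int a' * of_int b :: 'a) = of_int a * of_int b'"
    by (metis of_int_mult)
  then show ?thesis
    unfolding rep frac_eq_def by simp
qed

lemma frac_of_rat_of_int [simp]: "frac_of_rat (of_int a) = (of_int a, 1)"
  by (simp add: frac_of_rat_def)

lemma frac_of_rat_of_nat [simp]: "frac_of_rat (of_nat n) = (of_nat n, 1)"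
  using frac_of_rat_of_int[of "int n"] by simp

lemma frac_of_rat_0 [simp]: "frac_of_rat 0 = (0, 1)"
  and frac_of_rat_1 [simp]: "frac_of_rat 1 = (1, 1)"
  by (simp_all add: frac_of_rat_def)

lemma frac_of_rat_add: "frac_eq (frac_add (frac_of_rat p) (frac_of_rat q)) (frac_of_rat (p + q))"
proof -
  obtain a b where ab: "b > 0" "p = of_int a / of_int b" "frac_of_rat p = (of_int a, of_int b :: 'a)"
    by (rule frac_of_rat_cases)
  obtain c d where cd: "d > 0" "q = of_int c / of_int d" "frac_of_rat q = (of_int c, of_int d :: 'a)"
    by (rule frac_of_rat_cases)
  have "p + q = of_int (a * d + c * b) / of_int (b * d)"
    unfolding ab(2) cd(2) using ab(1) cd(1) by (simp add: field_simps)
  then have "frac_eq (frac_of_rat (p + q)) (of_int (a * d + c * b), of_int (b * d))"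
    using ab(1) cd(1) by (intro frac_of_rat_eq_quotient) simp_all
  then show ?thesis
    using frac_eq_sym unfolding ab(3) cd(3) frac_add_def by simp
qed

lemma frac_of_rat_mul: "frac_eq (frac_mul (frac_of_rat p) (frac_of_rat q)) (frac_of_rat (p * q))"
proof -
  obtain a b where ab: "b > 0" "p = of_int a / of_int b" "frac_of_rat p = (of_int a, of_int b :: 'a)"
    by (rule frac_of_rat_cases)
  obtain c d where cd: "d > 0" "q = of_int c / of_int d" "frac_of_rat q = (of_int c, of_int d :: 'a)"
    by (rule frac_of_rat_cases)
  have "p * q = of_int (a * c) / of_int (b * d)"
    using ab(2) cd(2) by simp
  then have "frac_eq (frac_of_rat (p * q)) (of_int (a * c), of_int (b * d))"
    using ab(1) cd(1) by (intro frac_of_rat_eq_quotient) simp_all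
  then show ?thesis
    using frac_eq_sym unfolding ab(3) cd(3) frac_mul_def by simp
qed

lemma frac_of_rat_diff: "frac_eq (frac_diff (frac_of_rat p) (frac_of_rat q)) (frac_of_rat (p - q))"
proof -
  obtain a b where ab: "b > 0" "p = of_int a / of_int b" "frac_of_rat p = (of_int a, of_int b :: 'a)"
    by (rule frac_of_rat_cases)
  obtain c d where cd: "d > 0" "q = of_int c / of_int d" "frac_of_rat q = (of_int c, of_int d :: 'a)"
    by (rule frac_of_rat_cases)
  have "p - q = of_int (a * d - c * b) / of_int (b * d)"
    unfolding ab(2) cd(2) using ab(1) cd(1) by (simp add: field_simps)
  then have "frac_eq (frac_of_rat (p - q)) (of_int (a * d - c * b), of_int (b * d))"
    using ab(1) cd(1) by (intro frac_of_rat_eq_quotient) simp_all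
  then show ?thesis
    using frac_eq_sym unfolding ab(3) cd(3) frac_diff_def frac_add_def frac_neg_def by simp
qed

lemma rat_factors_below:
  fixes a b q :: real
  assumes "0 < a" "0 < b" "q < a * b"
  obtains p1 p2 :: rat where "0 < p1" "of_rat p1 < a" "0 < p2" "of_rat p2 < b"
    "q < of_rat p1 * of_rat p2"
proof -
  have "max 0 (q / b) < a"
    using assms by (simp add: pos_divide_less_eq)
  then obtain p1 where p1: "max 0 (q / b) < of_rat p1" "of_rat p1 < a"
    using of_rat_dense by blast
  then have "max 0 (q / of_rat p1) < b"
    using assms(2) by (simp add: pos_divide_less_eq mult.commute)
  then obtain p2 where p2: "max 0 (q / of_rat p1) < of_rat p2" "of_rat p2 < b"
    using of_rat_dense by blast
  have "q < of_rat p1 * of_rat p2"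
    using p1(1) p2(1) by (simp add: pos_divide_less_eq mult.commute)
  with p1 p2 show thesis
    by (intro that) simp_all
qed

lemma rat_factors_above:
  fixes a b q :: real
  assumes "0 < a" "0 < b" "a * b < q"
  obtains p1 p2 :: rat where "a < of_rat p1" "b < of_rat p2" "of_rat p1 * of_rat p2 < q"
proof -
  have "a < q / b"
    using assms by (simp add: pos_less_divide_eq)
  then obtain p1 where p1: "a < of_rat p1" "of_rat p1 < q / b"
    using of_rat_dense by blast
  moreover have p1_pos: "(0::real) < of_rat p1"
    using p1(1) assms(1) by linarith
  ultimately have "b < q / of_rat p1"
    using assms(2) by (simp add: pos_less_divide_eq mult.commute)
  then obtain p2 where p2: "b < of_rat p2" "of_rat p2 < q / of_rat p1"
    using of_rat_dense by blast
  have "of_rat p1 * of_rat p2 < q"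
    using p2(2) p1_pos by (simp add: pos_less_divide_eq mult.commute)
  with p1 p2 show thesis
    by (intro that)
qed

lemma nonneg_if_nat_mult_add_nonneg:
  fixes \<alpha> \<beta> :: real
  assumes "\<And>k::nat. k \<ge> 1 \<Longrightarrow> real k * \<alpha> + \<beta> \<ge> 0"
  shows "\<alpha> \<ge> 0"
proof (rule ccontr)
  assume "\<not> \<alpha> \<ge> 0"
  then obtain k where "\<beta> < real k * (- \<alpha>)"
    using reals_Archimedean3[of "- \<alpha>"] by auto
  then have "real (Suc k) * \<alpha> + \<beta> < 0"
    using \<open>\<not> \<alpha> \<ge> 0\<close> by (simp add: algebra_simps)
  then show False
    using assms[of "Suc k"] by simp
qed

section \<open>Weak topologies on function spaces\<close>

lemma closedin_Collect_conj:
  assumes "closedin X {x \<in> topspace X. P x}" "closedin X {x \<in> topspace X. Q x}"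
  shows "closedin X {x \<in> topspace X. P x \<and> Q x}"
proof -
  have "{x \<in> topspace X. P x \<and> Q x} = {x \<in> topspace X. P x} \<inter> {x \<in> topspace X. Q x}"
    by blast
  then show ?thesis
    using closedin_Int[OF assms] by simp
qed

lemma closedin_Collect_all:
  assumes "\<And>i. closedin X {x \<in> topspace X. P i x}"
  shows "closedin X {x \<in> topspace X. \<forall>i. P i x}"
proof -
  have "{x \<in> topspace X. \<forall>i. P i x} = topspace X \<inter> (\<Inter>i. {x \<in> topspace X. P i x})"
    by blast
  moreover have "closedin X (\<Inter>i. {x \<in> topspace X. P i x})"
    by (rule closedin_INT) (simp_all add: assms)
  ultimately show ?thesis
    using closedin_Int[OF closedin_topspace] by simp
qed

lemma closedin_Collect_imp_const:
  "(Q \<Longrightarrow> closedin X {x \<in> topspace X. P x}) \<Longrightarrow> closedin X {x \<in> topspace X. Q \<longrightarrow> P x}"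
  by (cases Q) simp_all

lemma closedin_Collect_eq_real:
  assumes "continuous_map X euclideanreal f" "continuous_map X euclideanreal g"
  shows "closedin X {x \<in> topspace X. f x = g x}"
  using closedin_continuous_maps_eq[OF Hausdorff_space_euclidean assms] .

lemma closedin_Collect_nonneg_real:
  assumes "continuous_map X euclideanreal f"
  shows "closedin X {x \<in> topspace X. f x \<ge> 0}"
  using closedin_continuous_map_preimage[OF assms, of "{0..}"] closed_closedin closed_atLeast by auto

lemma topspace_coordinate_preimages:
  assumes "i0 \<in> I"
  shows "topspace (topology_generated_by {{f \<in> S. f i \<in> V} | i V. i \<in> I \<and> open V}) = S"
proof -
  have "S \<in> {{f \<in> S. f i \<in> V} | i V. i \<in> I \<and> open V}"
    using assms by (simp only: mem_Collect_eq) (intro exI[of _ i0] exI[of _ UNIV] conjI; simp)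
  then show ?thesis
    unfolding topology_generated_by_topspace by blast
qed

lemma continuous_map_coordinate_preimages:
  fixes S :: "('i \<Rightarrow> 'b::topological_space) set"
  assumes "i0 \<in> I"
    and const: "\<And>i f g. i \<notin> I \<Longrightarrow> f \<in> S \<Longrightarrow> g \<in> S \<Longrightarrow> f i = g i"
  shows "continuous_map (topology_generated_by {{f \<in> S. f i \<in> V} | i V. i \<in> I \<and> open V}) euclidean (\<lambda>f. f i)"
    (is "continuous_map ?T _ _")
proof (cases "i \<in> I")
  case True
  have "openin ?T {f \<in> topspace ?T. f i \<in> U}" if "open U" for U
  proof (rule topology_generated_by_Basis)
    show "{f \<in> topspace ?T. f i \<in> U} \<in> {{f \<in> S. f i \<in> V} | i V. i \<in> I \<and> open V}"
      unfolding topspace_coordinate_preimages[OF assms(1)] using True that by blast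
  qed
  then show ?thesis
    unfolding continuous_map_def by simp
next
  case False
  have eq: "(SOME g. g \<in> S) i = f i" if "f \<in> topspace ?T" for f
    using that const[OF False] someI[of "\<lambda>g. g \<in> S" f]
    unfolding topspace_coordinate_preimages[OF assms(1)] by blast
  have "continuous_map ?T euclidean (\<lambda>f. (SOME g. g \<in> S) i)"
    by simp
  then show ?thesis
    by (rule continuous_map_eq) (rule eq)
qed

lemma topology_generated_by_coordinate_preimages:
  fixes S :: "('i \<Rightarrow> 'b::topological_space) set"
  assumes "i0 \<in> I"
    and const: "\<And>i f g. i \<notin> I \<Longrightarrow> f \<in> S \<Longrightarrow> g \<in> S \<Longrightarrow> f i = g i"
  shows "topology_generated_by {{f \<in> S. f i \<in> V} | i V. i \<in> I \<and> open V} =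
    subtopology (product_topology (\<lambda>_. euclidean) UNIV) S"
    (is "?T = ?P")
proof -
  have top: "topspace ?P = topspace ?T"
    unfolding topspace_coordinate_preimages[OF assms(1)] by simp
  have "continuous_map ?T euclidean (\<lambda>f. f i)" for i
    using assms by (rule continuous_map_coordinate_preimages)
  then have "continuous_map ?T ?P id"
  proof (intro continuous_map_into_subtopology)
    show "id \<in> topspace ?T \<rightarrow> S"
      unfolding topspace_coordinate_preimages[OF assms(1)] by simp
  qed (simp add: continuous_map_componentwise_UNIV)
  moreover have "continuous_map ?P ?T id"
  proof (rule continuous_on_generated_topo)
    fix U assume "U \<in> {{f \<in> S. f i \<in> V} | i V. i \<in> I \<and> open V}"
    then obtain i V where U: "U = {f \<in> S. f i \<in> V}" "open V"
      by blast
    have "openin (product_topology (\<lambda>_. euclidean) UNIV) {f \<in> topspace (product_topology (\<lambda>_. euclidean) UNIV). f i \<in> V}"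
      using U(2) by (intro openin_continuous_map_preimage[OF continuous_map_product_projection]) simp_all
    moreover have "id -` U \<inter> topspace ?P = {f \<in> topspace (product_topology (\<lambda>_. euclidean) UNIV). f i \<in> V} \<inter> S"
      unfolding U by auto
    ultimately show "openin ?P (id -` U \<inter> topspace ?P)"
      unfolding openin_subtopology by blast
  next
    show "id ` topspace ?P \<subseteq> \<Union>{{f \<in> S. f i \<in> V} | i V. i \<in> I \<and> open V}"
      using top topology_generated_by_topspace by auto
  qed
  ultimately show ?thesis
    unfolding topology_eq using top topology_finer_continuous_id[of ?P ?T] topology_finer_continuous_id[of ?T ?P]
    by auto
qed

section \<open>Partially ordered rings and their characters\<close>

locale po_ring =
  fixes le :: "'a::comm_ring_1 \<Rightarrow> 'a \<Rightarrow> bool"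
  assumes po_comm_ring: "po_comm_ring le"
begin

abbreviation nonneg :: "'a \<Rightarrow> bool" where
  "nonneg x \<equiv> le 0 x"

lemma po_le_refl: "le x x"
  and po_le_antisym: "le x y \<Longrightarrow> le y x \<Longrightarrow> x = y"
  and po_le_trans: "le x y \<Longrightarrow> le y z \<Longrightarrow> le x z"
  and po_add_right_mono: "le x y \<Longrightarrow> le (x + t) (y + t)"
  and nonneg_mult: "nonneg x \<Longrightarrow> nonneg y \<Longrightarrow> nonneg (x * y)"
  and nonneg_square: "nonneg (x * x)"
  using po_comm_ring unfolding po_comm_ring_def by blast+

lemma le_iff_nonneg_diff: "le x y \<longleftrightarrow> nonneg (y - x)"
  using po_add_right_mono[of x y "- x"] po_add_right_mono[of 0 "y - x" x] by auto

lemma nonneg_0: "nonneg 0"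
  by (rule po_le_refl)

lemma nonneg_add: "nonneg x \<Longrightarrow> nonneg y \<Longrightarrow> nonneg (x + y)"
  using po_add_right_mono[of 0 x y] po_le_trans[of 0 y "x + y"] by simp

lemma nonneg_antisym: "nonneg x \<Longrightarrow> nonneg (- x) \<Longrightarrow> x = 0"
  using po_le_antisym[of 0 x] le_iff_nonneg_diff[of x 0] by simp

lemma nonneg_1: "nonneg 1"
  using nonneg_square[of 1] by simp

lemma nonneg_of_nat: "nonneg (of_nat n)"
  by (induction n) (simp_all add: nonneg_0 nonneg_1 nonneg_add)

lemma nonneg_of_int: "i \<ge> 0 \<Longrightarrow> nonneg (of_int i)"
  using nonneg_of_nat[of "nat i"] by simp

lemma LocD: "s \<in> Loc le \<Longrightarrow> nonneg (s - 1)"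
  and Loc_cancel: "s \<in> Loc le \<Longrightarrow> nonneg (r * s) \<Longrightarrow> nonneg r"
  unfolding Loc_def by blast+

lemma Loc_nonneg: "s \<in> Loc le \<Longrightarrow> nonneg s"
  using nonneg_add[OF LocD nonneg_1] by simp

lemma one_in_Loc: "1 \<in> Loc le"
  unfolding Loc_def using nonneg_0 by simp

lemma Loc_mult:
  assumes "s \<in> Loc le" "t \<in> Loc le"
  shows "s * t \<in> Loc le"
proof -
  have "s * t - 1 = (s - 1) * (t - 1) + (s - 1) + (t - 1)"
    by (simp add: algebra_simps)
  then have "nonneg (s * t - 1)"
    using assms by (metis LocD nonneg_add nonneg_mult)
  moreover have "nonneg r" if "nonneg (r * (s * t))" for r
    using that assms Loc_cancel by (metis mult.assoc)
  ultimately show ?thesis unfolding Loc_def by blast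
qed

lemma Loc_mult_cancel:
  assumes "s \<in> Loc le" "a * s = b * s"
  shows "a = b"
proof -
  have "(a - b) * s = 0" "(b - a) * s = 0"
    using assms(2) by (simp_all add: algebra_simps)
  then have "nonneg (a - b)" "nonneg (b - a)"
    using Loc_cancel[OF assms(1)] nonneg_0 by metis+
  then show ?thesis using nonneg_antisym[of "a - b"] by simp
qed

lemma frac_eq_trans:
  assumes "frac_eq x y" "frac_eq y z" "snd y \<in> Loc le"
  shows "frac_eq x z"
proof -
  have "(fst x * snd z) * snd y = (fst x * snd y) * snd z" by (simp add: ac_simps)
  also have "\<dots> = (fst y * snd z) * snd x" using assms(1) by (simp add: frac_eq_def ac_simps)
  also have "\<dots> = (fst z * snd x) * snd y" using assms(2) by (simp add: frac_eq_def ac_simps)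
  finally show ?thesis using Loc_mult_cancel[OF assms(3)] by (simp add: frac_eq_def)
qed

lemma Bd_iff: "x \<in> Bd le \<longleftrightarrow> snd x \<in> Loc le \<and>
    (\<exists>n::nat. nonneg (fst x + of_nat n * snd x) \<and> nonneg (of_nat n * snd x - fst x))"
proof -
  have "frac_le le (- of_nat n, 1) x \<longleftrightarrow> nonneg (fst x + of_nat n * snd x)"
    and "frac_le le x (of_nat n, 1) \<longleftrightarrow> nonneg (of_nat n * snd x - fst x)" for n
    unfolding frac_le_def by (subst le_iff_nonneg_diff; simp add: algebra_simps)+
  then show ?thesis
    unfolding Bd_def by simp
qed

lemma BdI:
  "snd x \<in> Loc le \<Longrightarrow> nonneg (fst x + of_nat n * snd x) \<Longrightarrow> nonneg (of_nat n * snd x - fst x) \<Longrightarrow> x \<in> Bd le"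
  unfolding Bd_iff by blast

lemma Bd_Loc: "x \<in> Bd le \<Longrightarrow> snd x \<in> Loc le"
  unfolding Bd_iff by blast

lemma Bd_add:
  assumes "x \<in> Bd le" "y \<in> Bd le"
  shows "frac_add x y \<in> Bd le"
proof -
  obtain n where x: "snd x \<in> Loc le" "nonneg (fst x + of_nat n * snd x)" "nonneg (of_nat n * snd x - fst x)"
    using assms(1) unfolding Bd_iff by blast
  obtain m where y: "snd y \<in> Loc le" "nonneg (fst y + of_nat m * snd y)" "nonneg (of_nat m * snd y - fst y)"
    using assms(2) unfolding Bd_iff by blast
  have "nonneg (snd y * (fst x + of_nat n * snd x) + snd x * (fst y + of_nat m * snd y))"
    and "nonneg (snd y * (of_nat n * snd x - fst x) + snd x * (of_nat m * snd y - fst y))"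
    using x y by (metis Loc_nonneg nonneg_add nonneg_mult)+
  then show ?thesis
    using Loc_mult[OF x(1) y(1)] by (intro BdI[where n = "n + m"]) (simp_all add: frac_add_def algebra_simps)
qed

lemma Bd_neg: "x \<in> Bd le \<Longrightarrow> frac_neg x \<in> Bd le"
  unfolding Bd_iff frac_neg_def by (auto simp: algebra_simps)

lemma Bd_diff: "x \<in> Bd le \<Longrightarrow> y \<in> Bd le \<Longrightarrow> frac_diff x y \<in> Bd le"
  unfolding frac_diff_def by (intro Bd_add Bd_neg)

lemma Bd_of_int: "(of_int i, 1) \<in> Bd le"
proof (rule BdI[where n = "nat \<bar>i\<bar>"])
  show "nonneg (fst (of_int i, 1) + of_nat (nat \<bar>i\<bar>) * snd (of_int i, 1 :: 'a))"
    using nonneg_of_int[of "i + \<bar>i\<bar>"] by simp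
  show "nonneg (of_nat (nat \<bar>i\<bar>) * snd (of_int i, 1) - fst (of_int i, 1 :: 'a))"
    using nonneg_of_int[of "\<bar>i\<bar> - i"] by simp
qed (simp add: one_in_Loc)

lemma Bd_of_nat: "(of_nat n, 1) \<in> Bd le"
  using Bd_of_int[of "int n"] by simp

lemma Bd_0: "(0, 1) \<in> Bd le"
  and Bd_1: "(1, 1) \<in> Bd le"
  using Bd_of_nat[of 0] Bd_of_nat[of 1] by simp_all

lemma Bd_if_bounded_by_Loc:
  assumes "s \<in> Loc le" "le (- s) r" "le r s"
  shows "(r, s) \<in> Bd le"
proof (rule BdI[where n = 1])
  have "nonneg (r - - s)" "nonneg (s - r)"
    using assms(2,3) le_iff_nonneg_diff by blast+
  then show "nonneg (fst (r, s) + of_nat 1 * snd (r, s))" "nonneg (of_nat 1 * snd (r, s) - fst (r, s))"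
    by simp_all
qed (simp add: assms(1))

lemma Bd_one_Loc:
  assumes "s \<in> Loc le"
  shows "(1, s) \<in> Bd le"
proof (rule Bd_if_bounded_by_Loc[OF assms])
  have "nonneg (1 - - s)"
    using nonneg_add[OF nonneg_1 Loc_nonneg[OF assms]] by simp
  then show "le (- s) 1"
    using le_iff_nonneg_diff by blast
  show "le 1 s"
    using LocD[OF assms] le_iff_nonneg_diff by blast
qed

lemma KsetD:
  assumes "\<phi> \<in> Kset le"
  shows Kset_outside: "x \<notin> Bd le \<Longrightarrow> \<phi> x = 0"
    and Kset_congr: "x \<in> Bd le \<Longrightarrow> y \<in> Bd le \<Longrightarrow> frac_eq x y \<Longrightarrow> \<phi> x = \<phi> y"
    and Kset_one: "\<phi> (1, 1) = 1"
    and Kset_add: "x \<in> Bd le \<Longrightarrow> y \<in> Bd le \<Longrightarrow> \<phi> (frac_add x y) = \<phi> x + \<phi> y"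
    and Kset_mult: "x \<in> Bd le \<Longrightarrow> y \<in> Bd le \<Longrightarrow> \<phi> (frac_mul x y) = \<phi> x * \<phi> y"
    and Kset_nonneg: "x \<in> Bd le \<Longrightarrow> nonneg (fst x) \<Longrightarrow> \<phi> x \<ge> 0"
proof -
  have "frac_le le (0, 1) x \<longleftrightarrow> nonneg (fst x)" for x
    by (simp add: frac_le_def)
  then show "x \<notin> Bd le \<Longrightarrow> \<phi> x = 0"
    and "x \<in> Bd le \<Longrightarrow> y \<in> Bd le \<Longrightarrow> frac_eq x y \<Longrightarrow> \<phi> x = \<phi> y"
    and "\<phi> (1, 1) = 1"
    and "x \<in> Bd le \<Longrightarrow> y \<in> Bd le \<Longrightarrow> \<phi> (frac_add x y) = \<phi> x + \<phi> y"
    and "x \<in> Bd le \<Longrightarrow> y \<in> Bd le \<Longrightarrow> \<phi> (frac_mul x y) = \<phi> x * \<phi> y"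
    and "x \<in> Bd le \<Longrightarrow> nonneg (fst x) \<Longrightarrow> \<phi> x \<ge> 0"
    using assms unfolding Kset_def mem_Collect_eq by blast+
qed

lemma Kset_of_nat: "\<phi> \<in> Kset le \<Longrightarrow> \<phi> (of_nat n, 1) = real n"
proof (induction n)
  case 0
  have "\<phi> (0, 1) = \<phi> (0, 1) + \<phi> (0, 1)"
    using Kset_add[OF 0 Bd_0 Bd_0] by (simp add: frac_add_def)
  then show ?case by simp
next
  case (Suc n)
  have "frac_add (of_nat n, 1) (1, 1) = (of_nat (Suc n), 1 :: 'a)"
    by (simp add: frac_add_def)
  then have "\<phi> (of_nat (Suc n), 1) = \<phi> (of_nat n, 1) + \<phi> (1, 1)"
    using Kset_add[OF Suc.prems Bd_of_nat[of n] Bd_1] by simp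
  then show ?case
    using Suc Kset_one by simp
qed

lemma Kset_neg:
  assumes "\<phi> \<in> Kset le" "x \<in> Bd le"
  shows "\<phi> (frac_neg x) = - \<phi> x"
proof -
  have "frac_eq (frac_add x (frac_neg x)) (0, 1)"
    by (simp add: frac_eq_def frac_add_def frac_neg_def)
  then have "\<phi> x + \<phi> (frac_neg x) = \<phi> (0, 1)"
    using assms Bd_add Bd_neg Bd_0 by (metis Kset_add Kset_congr)
  then show ?thesis
    using Kset_of_nat[OF assms(1), of 0] by simp
qed

lemma Kset_diff: "\<phi> \<in> Kset le \<Longrightarrow> x \<in> Bd le \<Longrightarrow> y \<in> Bd le \<Longrightarrow> \<phi> (frac_diff x y) = \<phi> x - \<phi> y"
  unfolding frac_diff_def by (simp add: Kset_add Bd_neg Kset_neg)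

lemma Kset_bounded: "\<exists>n::nat. \<forall>\<phi>\<in>Kset le. \<bar>\<phi> x\<bar> \<le> real n"
proof (cases "x \<in> Bd le")
  case False
  then have "\<forall>\<phi>\<in>Kset le. \<bar>\<phi> x\<bar> \<le> real 0"
    using Kset_outside by simp
  then show ?thesis by blast
next
  case True
  then obtain n where n: "nonneg (fst x + of_nat n * snd x)" "nonneg (of_nat n * snd x - fst x)"
    unfolding Bd_iff by blast
  have "\<bar>\<phi> x\<bar> \<le> real n" if \<phi>: "\<phi> \<in> Kset le" for \<phi>
  proof -
    have B: "frac_add x (of_nat n, 1) \<in> Bd le" "frac_diff (of_nat n, 1) x \<in> Bd le"
      using True by (simp_all add: Bd_add Bd_diff Bd_of_nat)
    have "\<phi> (frac_add x (of_nat n, 1)) \<ge> 0"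
      by (rule Kset_nonneg[OF \<phi> B(1)]) (use n(1) in \<open>simp add: frac_add_def\<close>)
    moreover have "\<phi> (frac_diff (of_nat n, 1) x) \<ge> 0"
      by (rule Kset_nonneg[OF \<phi> B(2)]) (use n(2) in \<open>simp add: frac_diff_def frac_add_def frac_neg_def\<close>)
    ultimately show ?thesis
      using Kset_add[OF \<phi> True Bd_of_nat] Kset_diff[OF \<phi> Bd_of_nat True] Kset_of_nat[OF \<phi>] by simp
  qed
  then show ?thesis by blast
qed

lemma Kset_closedin: "closedin (product_topology (\<lambda>_. euclideanreal) UNIV) (Kset le)"
proof -
  have "Kset le = {\<phi> \<in> topspace (product_topology (\<lambda>_. euclideanreal) UNIV). \<phi> \<in> Kset le}"
    by simp
  also have "closedin (product_topology (\<lambda>_. euclideanreal) UNIV) \<dots>"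
    unfolding Kset_def mem_Collect_eq Ball_def
    by (intro closedin_Collect_conj closedin_Collect_all closedin_Collect_imp_const
        closedin_Collect_eq_real closedin_Collect_nonneg_real continuous_map_add continuous_map_real_mult
        continuous_map_product_projection) auto
  finally show ?thesis .
qed

lemma Kset_compactin: "compactin (product_topology (\<lambda>_. euclideanreal) UNIV) (Kset le)"
proof -
  have "\<forall>x. \<exists>n. \<forall>\<phi>\<in>Kset le. \<bar>\<phi> x\<bar> \<le> real n"
    by (rule allI) (rule Kset_bounded)
  then obtain b where b: "\<forall>x. \<forall>\<phi>\<in>Kset le. \<bar>\<phi> x\<bar> \<le> real (b x)"
    by (elim choice[THEN exE])
  let ?box = "PiE UNIV (\<lambda>x. {- real (b x) .. real (b x)})"
  show ?thesis
  proof (rule closed_compactin[OF _ _ Kset_closedin])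
    show "compactin (product_topology (\<lambda>_. euclideanreal) UNIV) ?box"
      by (subst compactin_PiE) (intro disjI2 ballI; simp)
    show "Kset le \<subseteq> ?box"
    proof
      fix \<phi> assume \<phi>: "\<phi> \<in> Kset le"
      have "\<phi> x \<in> {- real (b x) .. real (b x)}" for x
      proof -
        have "\<bar>\<phi> x\<bar> \<le> real (b x)"
          using b \<phi> by blast
        then show ?thesis
          by (simp add: abs_le_iff)
      qed
      then show "\<phi> \<in> ?box"
        by (simp add: PiE_iff)
    qed
  qed
qed

lemma Ktop_eq_subtopology: "Ktop le = subtopology (product_topology (\<lambda>_. euclideanreal) UNIV) (Kset le)"
  unfolding Ktop_def by (rule topology_generated_by_coordinate_preimages[OF Bd_1]) (simp add: Kset_outside)

lemma compact_Hausdorff_Ktop: "compact_space (Ktop le) \<and> Hausdorff_space (Ktop le)"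
  unfolding Ktop_eq_subtopology
  by (simp add: compact_space_subtopology Kset_compactin Hausdorff_space_subtopology Hausdorff_space_product_topology)

end

section \<open>Preorderings of bounded fractions\<close>

locale nat_localizing_ring = po_ring +
  assumes of_nat_in_Loc: "\<forall>n::nat. n \<ge> 1 \<longrightarrow> of_nat n \<in> Loc le"
begin

lemma of_int_in_Loc:
  assumes "i > 0"
  shows "of_int i \<in> Loc le"
proof -
  have "of_nat (nat i) \<in> Loc le"
    using of_nat_in_Loc[rule_format, of "nat i"] assms by simp
  then show ?thesis
    using assms by simp
qed

lemma Bd_mul:
  assumes "x \<in> Bd le" "y \<in> Bd le"
  shows "frac_mul x y \<in> Bd le"
proof -
  obtain n where x: "snd x \<in> Loc le" "nonneg (fst x + of_nat n * snd x)" "nonneg (of_nat n * snd x - fst x)"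
    using assms(1) unfolding Bd_iff by blast
  obtain m where y: "snd y \<in> Loc le" "nonneg (fst y + of_nat m * snd y)" "nonneg (of_nat m * snd y - fst y)"
    using assms(2) unfolding Bd_iff by blast
  let ?N = "of_nat (n * m) * (snd x * snd y)"
  have "(fst x * fst y + ?N) * 2 =
      (fst x + of_nat n * snd x) * (fst y + of_nat m * snd y) + (of_nat n * snd x - fst x) * (of_nat m * snd y - fst y)"
    by (simp add: algebra_simps)
  also have "nonneg \<dots>"
    by (rule nonneg_add[OF nonneg_mult[OF x(2) y(2)] nonneg_mult[OF x(3) y(3)]])
  finally have 1: "nonneg ((fst x * fst y + ?N) * 2)" .
  have "(?N - fst x * fst y) * 2 =
      (fst x + of_nat n * snd x) * (of_nat m * snd y - fst y) + (of_nat n * snd x - fst x) * (fst y + of_nat m * snd y)"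
    by (simp add: algebra_simps)
  also have "nonneg \<dots>"
    by (rule nonneg_add[OF nonneg_mult[OF x(2) y(3)] nonneg_mult[OF x(3) y(2)]])
  finally have 2: "nonneg ((?N - fst x * fst y) * 2)" .
  have "(2::'a) \<in> Loc le"
    using of_int_in_Loc[of 2] by simp
  then have "nonneg (fst x * fst y + ?N)" "nonneg (?N - fst x * fst y)"
    using Loc_cancel 1 2 by blast+
  then show ?thesis
    using Loc_mult[OF x(1) y(1)] by (intro BdI[where n = "n * m"]) (simp_all add: frac_mul_def)
qed

lemma Bd_frac_of_rat: "frac_of_rat q \<in> Bd le"
proof -
  obtain a b where ab: "b > 0" "frac_of_rat q = (of_int a, of_int b :: 'a)"
    by (rule frac_of_rat_cases)
  have "\<bar>a\<bar> \<le> \<bar>a\<bar> * b"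
    using ab(1) by (simp add: mult_le_cancel_left1)
  then have "nonneg (of_int (a + \<bar>a\<bar> * b))" "nonneg (of_int (\<bar>a\<bar> * b - a))"
    by (intro nonneg_of_int; linarith)+
  then show ?thesis
    using of_int_in_Loc[OF ab(1)] by (intro BdI[where n = "nat \<bar>a\<bar>"]) (simp_all add: ab(2))
qed

lemma Kset_inverse_of_nat:
  assumes "\<phi> \<in> Kset le" "n \<ge> 1"
  shows "\<phi> (1, of_nat n) = 1 / real n"
proof -
  have B: "(1, of_nat n) \<in> Bd le"
    using Bd_one_Loc of_nat_in_Loc assms(2) by blast
  have "frac_eq (frac_mul (of_nat n, 1) (1, of_nat n)) (1, 1)"
    by (simp add: frac_eq_def frac_mul_def)
  then have "\<phi> (frac_mul (of_nat n, 1) (1, of_nat n)) = 1"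
    using Kset_congr[OF assms(1) Bd_mul[OF Bd_of_nat B] Bd_1] Kset_one[OF assms(1)] by simp
  then have "real n * \<phi> (1, of_nat n) = 1"
    using Kset_mult[OF assms(1) Bd_of_nat B] Kset_of_nat[OF assms(1)] by simp
  then show ?thesis
    using assms(2) by (simp add: field_simps)
qed

lemma Kset_one_Loc_nonneg: "\<phi> \<in> Kset le \<Longrightarrow> s \<in> Loc le \<Longrightarrow> \<phi> (1, s) \<ge> 0"
  using Kset_nonneg Bd_one_Loc nonneg_1 by simp

lemma Kset_mult_one_Loc:
  "\<phi> \<in> Kset le \<Longrightarrow> (r, s) \<in> Bd le \<Longrightarrow> t \<in> Loc le \<Longrightarrow> \<phi> (r, s * t) = \<phi> (r, s) * \<phi> (1, t)"
  using Kset_mult[of \<phi> "(r, s)" "(1, t)"] Bd_one_Loc by (simp add: frac_mul_def)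

definition Bd_nonneg :: "('a \<times> 'a) set" where
  "Bd_nonneg = {x \<in> Bd le. nonneg (fst x)}"

definition preordering :: "('a \<times> 'a) set \<Rightarrow> bool" where
  "preordering P \<longleftrightarrow> P \<subseteq> Bd le \<and> Bd_nonneg \<subseteq> P \<and>
     (\<forall>x\<in>P. \<forall>y\<in>Bd le. frac_eq x y \<longrightarrow> y \<in> P) \<and>
     (\<forall>x\<in>P. \<forall>y\<in>P. frac_add x y \<in> P \<and> frac_mul x y \<in> P)"

definition proper_preordering :: "('a \<times> 'a) set \<Rightarrow> bool" where
  "proper_preordering P \<longleftrightarrow> preordering P \<and> (- 1, 1) \<notin> P"

definition adjoin :: "('a \<times> 'a) set \<Rightarrow> 'a \<times> 'a \<Rightarrow> ('a \<times> 'a) set" where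
  "adjoin P x = {z \<in> Bd le. \<exists>a\<in>P. \<exists>b\<in>P. frac_eq z (frac_add a (frac_mul x b))}"

lemma preorderingD:
  assumes "preordering P"
  shows preordering_Bd: "x \<in> P \<Longrightarrow> x \<in> Bd le"
    and preordering_congr: "x \<in> P \<Longrightarrow> y \<in> Bd le \<Longrightarrow> frac_eq x y \<Longrightarrow> y \<in> P"
    and preordering_add: "x \<in> P \<Longrightarrow> y \<in> P \<Longrightarrow> frac_add x y \<in> P"
    and preordering_mult: "x \<in> P \<Longrightarrow> y \<in> P \<Longrightarrow> frac_mul x y \<in> P"
    and preordering_nonneg: "x \<in> Bd le \<Longrightarrow> nonneg (fst x) \<Longrightarrow> x \<in> P"
proof -
  note P = assms[unfolded preordering_def]
  show "x \<in> P \<Longrightarrow> x \<in> Bd le"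
    using P by (elim conjE) (rule subsetD)
  show "x \<in> P \<Longrightarrow> y \<in> Bd le \<Longrightarrow> frac_eq x y \<Longrightarrow> y \<in> P"
    using P by simp
  show "x \<in> P \<Longrightarrow> y \<in> P \<Longrightarrow> frac_add x y \<in> P" "x \<in> P \<Longrightarrow> y \<in> P \<Longrightarrow> frac_mul x y \<in> P"
    using P by simp_all
  show "x \<in> P" if "x \<in> Bd le" "nonneg (fst x)"
  proof -
    have "x \<in> Bd_nonneg"
      using that by (simp add: Bd_nonneg_def)
    then show ?thesis
      using P by blast
  qed
qed

lemma preordering_if_proper: "proper_preordering P \<Longrightarrow> preordering P"
  by (simp add: proper_preordering_def)

lemma preordering_square:
  assumes "preordering P" "x \<in> Bd le"
  shows "frac_mul x x \<in> P"
proof (rule preordering_nonneg[OF assms(1) Bd_mul[OF assms(2) assms(2)]])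
  show "nonneg (fst (frac_mul x x))"
    using nonneg_square by (simp add: frac_mul_def)
qed

lemma preordering_Bd_nonneg: "preordering Bd_nonneg"
proof -
  have Bd: "Bd_nonneg \<subseteq> Bd le"
    by (auto simp: Bd_nonneg_def)
  have congr: "y \<in> Bd_nonneg" if "x \<in> Bd_nonneg" "y \<in> Bd le" "frac_eq x y" for x y
  proof -
    have "nonneg (fst x * snd y)"
      using that(1,2) Bd_Loc Loc_nonneg nonneg_mult by (simp add: Bd_nonneg_def)
    then have "nonneg (fst y * snd x)"
      using that(3) by (simp add: frac_eq_def)
    moreover have "snd x \<in> Loc le"
      using that(1) Bd_Loc by (simp add: Bd_nonneg_def)
    ultimately have "nonneg (fst y)"
      using Loc_cancel by blast
    then show ?thesis
      using that(2) by (simp add: Bd_nonneg_def)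
  qed
  have closed: "frac_add x y \<in> Bd_nonneg \<and> frac_mul x y \<in> Bd_nonneg" if "x \<in> Bd_nonneg" "y \<in> Bd_nonneg" for x y
  proof -
    have x: "x \<in> Bd le" "nonneg (fst x)" "nonneg (snd x)" and y: "y \<in> Bd le" "nonneg (fst y)" "nonneg (snd y)"
      using that Bd_Loc Loc_nonneg by (simp_all add: Bd_nonneg_def)
    have "nonneg (fst x * snd y + fst y * snd x)"
      by (rule nonneg_add[OF nonneg_mult[OF x(2) y(3)] nonneg_mult[OF y(2) x(3)]])
    moreover have "nonneg (fst x * fst y)"
      by (rule nonneg_mult[OF x(2) y(2)])
    ultimately show ?thesis
      using Bd_add[OF x(1) y(1)] Bd_mul[OF x(1) y(1)] by (simp add: Bd_nonneg_def frac_add_def frac_mul_def)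
  qed
  show ?thesis
    unfolding preordering_def using Bd congr closed by blast
qed

lemma adjoinI:
  "z \<in> Bd le \<Longrightarrow> a \<in> P \<Longrightarrow> b \<in> P \<Longrightarrow> frac_eq z (frac_add a (frac_mul x b)) \<Longrightarrow> z \<in> adjoin P x"
  unfolding adjoin_def by blast

lemma adjoinE:
  assumes "z \<in> adjoin P x"
  obtains a b where "z \<in> Bd le" "a \<in> P" "b \<in> P" "frac_eq z (frac_add a (frac_mul x b))"
  using assms unfolding adjoin_def by blast

lemma preordering_zero: "preordering P \<Longrightarrow> (0, 1) \<in> P"
  and preordering_one: "preordering P \<Longrightarrow> (1, 1) \<in> P"
  using preordering_nonneg Bd_0 Bd_1 nonneg_0 nonneg_1 by simp_all

lemma subset_adjoin:
  assumes "preordering P"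
  shows "P \<subseteq> adjoin P x"
proof
  fix z assume z: "z \<in> P"
  have "frac_eq z (frac_add z (frac_mul x (0, 1)))"
    by (simp add: frac_eq_def frac_add_def frac_mul_def algebra_simps)
  then show "z \<in> adjoin P x"
    by (rule adjoinI[OF preordering_Bd[OF assms z] z preordering_zero[OF assms]])
qed

lemma mem_adjoin:
  assumes "preordering P" "x \<in> Bd le"
  shows "x \<in> adjoin P x"
proof -
  have "frac_eq x (frac_add (0, 1) (frac_mul x (1, 1)))"
    by (simp add: frac_eq_def frac_add_def frac_mul_def)
  then show ?thesis
    by (rule adjoinI[OF assms(2) preordering_zero[OF assms(1)] preordering_one[OF assms(1)]])
qed

lemma preordering_adjoin:
  assumes P: "preordering P" and x: "x \<in> Bd le"
  shows "preordering (adjoin P x)"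
  unfolding preordering_def
proof (intro conjI ballI impI subsetI)
  fix z w
  show "z \<in> Bd le" if "z \<in> adjoin P x"
    using that by (rule adjoinE)
  show "z \<in> adjoin P x" if "z \<in> Bd_nonneg"
    using that subset_adjoin[OF P] preordering_nonneg[OF P] unfolding Bd_nonneg_def by blast
  assume "z \<in> adjoin P x"
  then obtain a b where z: "z \<in> Bd le" "a \<in> P" "b \<in> P" "frac_eq z (frac_add a (frac_mul x b))"
    by (rule adjoinE)
  show "w \<in> adjoin P x" if "w \<in> Bd le" "frac_eq z w"
    using frac_eq_trans[OF frac_eq_sym[OF that(2)] z(4) Bd_Loc[OF z(1)]] by (rule adjoinI[OF that(1) z(2,3)])
  assume "w \<in> adjoin P x"
  then obtain c d where w: "w \<in> Bd le" "c \<in> P" "d \<in> P" "frac_eq w (frac_add c (frac_mul x d))"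
    by (rule adjoinE)
  have a: "a \<in> Bd le" "b \<in> Bd le" "c \<in> Bd le" "d \<in> Bd le"
    using z w preordering_Bd[OF P] by simp_all
  have ab_cd: "frac_add a (frac_mul x b) \<in> Bd le" "frac_add c (frac_mul x d) \<in> Bd le"
    using a x by (simp_all add: Bd_add Bd_mul)
  have "frac_eq (frac_add z w) (frac_add (frac_add a c) (frac_mul x (frac_add b d)))"
    using frac_eq_trans[OF frac_eq_add[OF z(4) w(4)] frac_add_affine Bd_Loc[OF Bd_add[OF ab_cd]]] .
  then show "frac_add z w \<in> adjoin P x"
    by (rule adjoinI[OF Bd_add[OF z(1) w(1)] preordering_add[OF P z(2) w(2)] preordering_add[OF P z(3) w(3)]])
  have "frac_eq (frac_mul z w) (frac_add (frac_add (frac_mul a c) (frac_mul (frac_mul x x) (frac_mul b d)))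
      (frac_mul x (frac_add (frac_mul a d) (frac_mul c b))))"
    using frac_eq_trans[OF frac_eq_mul[OF z(4) w(4)] frac_mul_affine Bd_Loc[OF Bd_mul[OF ab_cd]]] .
  moreover have "frac_add (frac_mul a c) (frac_mul (frac_mul x x) (frac_mul b d)) \<in> P"
    using preordering_add[OF P] preordering_mult[OF P] preordering_square[OF P x] z(2,3) w(2,3) by simp
  moreover have "frac_add (frac_mul a d) (frac_mul c b) \<in> P"
    using preordering_add[OF P] preordering_mult[OF P] z(2,3) w(2,3) by simp
  ultimately show "frac_mul z w \<in> adjoin P x"
    by (intro adjoinI[OF Bd_mul[OF z(1) w(1)]])
qed

lemma preordering_Union_chain:
  assumes "C \<noteq> {}" and pre: "\<And>Q. Q \<in> C \<Longrightarrow> preordering Q"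
    and chain: "\<And>Q Q'. Q \<in> C \<Longrightarrow> Q' \<in> C \<Longrightarrow> Q \<subseteq> Q' \<or> Q' \<subseteq> Q"
  shows "preordering (\<Union>C)"
  unfolding preordering_def
proof (intro conjI ballI impI)
  show "\<Union>C \<subseteq> Bd le"
    using pre preordering_Bd by blast
  obtain Q where "Q \<in> C"
    using assms(1) by blast
  then have "Bd_nonneg \<subseteq> Q"
    using preordering_nonneg[OF pre] unfolding Bd_nonneg_def by blast
  with \<open>Q \<in> C\<close> show "Bd_nonneg \<subseteq> \<Union>C"
    by blast
  fix x y
  assume "x \<in> \<Union>C"
  then obtain X where X: "X \<in> C" "x \<in> X"
    by blast
  show "y \<in> \<Union>C" if "y \<in> Bd le" "frac_eq x y"
    using preordering_congr[OF pre[OF X(1)] X(2) that] X(1) by blast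
  assume "y \<in> \<Union>C"
  then obtain Y where Y: "Y \<in> C" "y \<in> Y"
    by blast
  obtain Z where Z: "Z \<in> C" "x \<in> Z" "y \<in> Z"
    using chain[OF X(1) Y(1)] X Y by blast
  show "frac_add x y \<in> \<Union>C" "frac_mul x y \<in> \<Union>C"
    using preordering_add[OF pre[OF Z(1)] Z(2,3)] preordering_mult[OF pre[OF Z(1)] Z(2,3)] Z(1) by blast+
qed

lemma maximal_proper_preordering:
  assumes "proper_preordering P"
  obtains M where "proper_preordering M" "P \<subseteq> M" "\<And>Q. proper_preordering Q \<Longrightarrow> M \<subseteq> Q \<Longrightarrow> Q = M"
proof -
  let ?A = "{Q. proper_preordering Q \<and> P \<subseteq> Q}"
  have "\<exists>M\<in>?A. \<forall>Q\<in>?A. M \<subseteq> Q \<longrightarrow> Q = M"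
  proof (rule subset_Zorn)
    fix C assume C: "subset.chain ?A C"
    show "\<exists>U\<in>?A. \<forall>Q\<in>C. Q \<subseteq> U"
    proof (cases "C = {}")
      case True
      have "P \<in> ?A"
        using assms by simp
      with True show ?thesis
        by blast
    next
      case False
      then obtain Q where "Q \<in> C"
        by blast
      have pre: "preordering Q" "(- 1, 1) \<notin> Q" "P \<subseteq> Q" if "Q \<in> C" for Q
        using C that by (auto simp: subset_chain_def proper_preordering_def)
      have "preordering (\<Union>C)"
      proof (rule preordering_Union_chain[OF False pre(1)])
        show "Q \<subseteq> Q' \<or> Q' \<subseteq> Q" if "Q \<in> C" "Q' \<in> C" for Q Q'
          using C that by (simp add: subset_chain_def)
      qed
      moreover have "(- 1, 1) \<notin> \<Union>C" "P \<subseteq> \<Union>C"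
        using pre(2) pre(3)[OF \<open>Q \<in> C\<close>] \<open>Q \<in> C\<close> by blast+
      ultimately have "\<Union>C \<in> ?A"
        by (simp add: proper_preordering_def)
      then show ?thesis
        by blast
    qed
  qed
  then obtain M where M: "proper_preordering M" "P \<subseteq> M" and max: "\<forall>Q\<in>?A. M \<subseteq> Q \<longrightarrow> Q = M"
    by blast
  show thesis
  proof (rule that[OF M])
    fix Q assume "proper_preordering Q" "M \<subseteq> Q"
    then show "Q = M"
      using max M(2) by blast
  qed
qed

lemma maximal_preordering_total:
  assumes M: "proper_preordering M" "\<And>Q. proper_preordering Q \<Longrightarrow> M \<subseteq> Q \<Longrightarrow> Q = M"
    and x: "x \<in> Bd le"
  shows "x \<in> M \<or> frac_neg x \<in> M"
proof (rule ccontr)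
  assume not_total: "\<not> (x \<in> M \<or> frac_neg x \<in> M)"
  have pre: "preordering M"
    using M(1) by (simp add: proper_preordering_def)
  have "(- 1, 1) \<in> adjoin M y" if "y \<in> Bd le" "y \<notin> M" for y
  proof (rule ccontr)
    assume "(- 1, 1) \<notin> adjoin M y"
    then have "adjoin M y = M"
      using M(2) preordering_adjoin[OF pre that(1)] subset_adjoin[OF pre] by (simp add: proper_preordering_def)
    then show False
      using mem_adjoin[OF pre that(1)] that(2) by blast
  qed
  then have "(- 1, 1) \<in> adjoin M x" "(- 1, 1) \<in> adjoin M (frac_neg x)"
    using not_total x Bd_neg by blast+
  then obtain a1 b1 a2 b2 where a: "a1 \<in> M" "b1 \<in> M" "a2 \<in> M" "b2 \<in> M"
    and minus_one: "frac_eq (- 1, 1) (frac_add a1 (frac_mul x b1))"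
      "frac_eq (- 1, 1) (frac_add a2 (frac_mul (frac_neg x) b2))"
    by (elim adjoinE)
  have "frac_mul x x \<in> M"
    by (rule preordering_square[OF pre x])
  then have "frac_add (frac_add a1 a2) (frac_add (frac_mul a1 a2) (frac_mul (frac_mul x x) (frac_mul b1 b2))) \<in> M"
    using a by (simp add: preordering_add[OF pre] preordering_mult[OF pre])
  moreover have "(- 1, 1) \<in> Bd le"
    using Bd_of_int[of "- 1"] by simp
  ultimately have "(- 1, 1) \<in> M"
    using preordering_congr[OF pre] frac_eq_sym[OF frac_eq_minus_one_both_signs[OF minus_one]] by blast
  then show False
    using M(1) by (simp add: proper_preordering_def)
qed

text \<open>If \<open>-1 = a - f b\<close> with \<open>a, b \<ge> 0\<close>, then \<open>f b = 1 + a\<close>, which is the hypothesis \<open>eq\<close>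
  below with denominators cleared. Choosing \<open>k \<ge> b\<close>, a lower bound \<open>k f \<ge> -(N + 1)\<close> improves
  to \<open>k f \<ge> -N\<close>; descending from \<open>f \<ge> -m\<close> gives \<open>f \<ge> 0\<close>.\<close>

lemma nonneg_descent_step:
  fixes g w \<alpha> \<sigma> \<beta> \<rho> :: 'a
  assumes eq: "g * \<beta> * \<sigma> = (\<sigma> + \<alpha>) * w * \<rho>"
    and nonneg: "nonneg \<alpha>" "nonneg \<beta>" "nonneg w" and Loc: "\<sigma> \<in> Loc le" "\<rho> \<in> Loc le" "k \<ge> 1"
    and bound: "nonneg (of_nat k * \<rho> - \<beta>)"
    and step: "nonneg (of_nat k * g + of_nat (Suc N) * w)"
  shows "nonneg (of_nat k * g + of_nat N * w)"
proof -
  let ?K = "of_nat k :: 'a" and ?N = "of_nat N :: 'a" and ?N' = "of_nat (Suc N) :: 'a"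
  have "\<sigma> * ((?K * \<rho> - \<beta>) * (?K * g + ?N' * w)) + ?K * \<alpha> * w * \<rho> + ?N' * \<beta> * w * \<sigma>
      = ?K * ?K * \<rho> * g * \<sigma> + ?K * (?N + 1) * \<rho> * w * \<sigma> - ?K * (g * \<beta> * \<sigma>) + ?K * \<alpha> * w * \<rho>"
    by (simp add: algebra_simps)
  also have "\<dots> = (?K * g + ?N * w) * (?K * \<rho> * \<sigma>)"
    unfolding eq by (simp add: algebra_simps)
  finally have expand: "(?K * g + ?N * w) * (?K * \<rho> * \<sigma>) =
      \<sigma> * ((?K * \<rho> - \<beta>) * (?K * g + ?N' * w)) + ?K * \<alpha> * w * \<rho> + ?N' * \<beta> * w * \<sigma>"
    by simp
  have "nonneg (\<sigma> * ((?K * \<rho> - \<beta>) * (?K * g + ?N' * w)) + ?K * \<alpha> * w * \<rho> + ?N' * \<beta> * w * \<sigma>)"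
    using nonneg_add[OF nonneg_add[OF nonneg_mult[OF Loc_nonneg[OF Loc(1)] nonneg_mult[OF bound step]]
        nonneg_mult[OF nonneg_mult[OF nonneg_mult[OF nonneg_of_nat nonneg(1)] nonneg(3)] Loc_nonneg[OF Loc(2)]]]
        nonneg_mult[OF nonneg_mult[OF nonneg_mult[OF nonneg_of_nat nonneg(2)] nonneg(3)] Loc_nonneg[OF Loc(1)]]] .
  then have "nonneg ((?K * g + ?N * w) * (?K * \<rho> * \<sigma>))"
    by (simp only: expand)
  moreover have "?K * \<rho> * \<sigma> \<in> Loc le"
    using Loc of_nat_in_Loc by (simp add: Loc_mult)
  ultimately show ?thesis
    using Loc_cancel by blast
qed

lemma nonneg_by_descent:
  fixes g w \<alpha> \<sigma> \<beta> \<rho> :: 'a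
  assumes eq: "g * \<beta> * \<sigma> = (\<sigma> + \<alpha>) * w * \<rho>"
    and nonneg: "nonneg \<alpha>" "nonneg \<beta>" "nonneg w" and Loc: "\<sigma> \<in> Loc le" "\<rho> \<in> Loc le" "k \<ge> 1"
    and bound: "nonneg (of_nat k * \<rho> - \<beta>)"
    and lower: "nonneg (g + of_nat m * w)"
  shows "nonneg g"
proof -
  have descent: "nonneg (of_nat k * g + of_nat (k * m - j) * w)" if "j \<le> k * m" for j
    using that
  proof (induction j)
    case 0
    have "of_nat k * g + of_nat (k * m - 0) * w = of_nat k * (g + of_nat m * w)"
      by (simp add: algebra_simps)
    then show ?case
      using nonneg_mult[OF nonneg_of_nat lower] by simp
  next
    case (Suc j)
    then have "k * m - j = Suc (k * m - Suc j)"
      by simp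
    then have "nonneg (of_nat k * g + of_nat (Suc (k * m - Suc j)) * w)"
      using Suc by simp
    then show ?case
      by (rule nonneg_descent_step[OF eq nonneg Loc bound])
  qed
  have "nonneg (g * of_nat k)"
    using descent[of "k * m"] by (simp add: mult.commute)
  then show ?thesis
    using Loc_cancel of_nat_in_Loc Loc(3) by blast
qed

lemma nonneg_if_minus_one_in_adjoin_neg:
  assumes f: "f \<in> Bd le" and "(- 1, 1) \<in> adjoin Bd_nonneg (frac_neg f)"
  shows "nonneg (fst f)"
proof -
  obtain a b where ab: "a \<in> Bd_nonneg" "b \<in> Bd_nonneg" "frac_eq (- 1, 1) (frac_add a (frac_mul (frac_neg f) b))"
    using assms(2) by (rule adjoinE)
  obtain \<alpha> \<sigma> \<beta> \<rho> g w where p: "a = (\<alpha>, \<sigma>)" "b = (\<beta>, \<rho>)" "f = (g, w)"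
    by (metis prod.exhaust)
  have pa: "nonneg \<alpha>" "nonneg \<beta>" "\<sigma> \<in> Loc le" "\<rho> \<in> Loc le" "w \<in> Loc le"
    using ab(1,2) f Bd_Loc unfolding p Bd_nonneg_def by auto
  have "- (\<sigma> * (w * \<rho>)) = \<alpha> * (w * \<rho>) + - g * \<beta> * \<sigma>"
    using ab(3) unfolding p frac_eq_def frac_add_def frac_mul_def frac_neg_def by simp
  then have eq: "g * \<beta> * \<sigma> = (\<sigma> + \<alpha>) * w * \<rho>"
    by (simp add: algebra_simps)
  obtain k where k: "nonneg (of_nat k * \<rho> - \<beta>)"
    using ab(2) unfolding p Bd_nonneg_def Bd_iff by auto
  have "of_nat (Suc k) * \<rho> - \<beta> = (of_nat k * \<rho> - \<beta>) + \<rho>"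
    by (simp add: algebra_simps)
  then have bound: "nonneg (of_nat (Suc k) * \<rho> - \<beta>)"
    using nonneg_add[OF k Loc_nonneg[OF pa(4)]] by (simp only:)
  obtain m where m: "nonneg (g + of_nat m * w)"
    using f unfolding p Bd_iff by auto
  have "nonneg g"
    by (rule nonneg_by_descent[OF eq pa(1,2) Loc_nonneg[OF pa(5)] pa(3,4) _ bound m]) simp
  then show ?thesis
    by (simp add: p)
qed

end

section \<open>Characters from maximal preorderings\<close>

context nat_localizing_ring
begin

lemma frac_of_rat_in_Bd_nonneg: "q \<ge> 0 \<Longrightarrow> frac_of_rat q \<in> Bd_nonneg"
proof -
  assume "q \<ge> 0"
  obtain a b where ab: "b > 0" "q = of_int a / of_int b" "frac_of_rat q = (of_int a, of_int b :: 'a)"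
    by (rule frac_of_rat_cases)
  have "a \<ge> 0"
    using \<open>q \<ge> 0\<close> ab(1,2) by (simp add: zero_le_divide_iff)
  then show ?thesis
    using Bd_frac_of_rat[of q] nonneg_of_int by (simp add: Bd_nonneg_def ab(3))
qed

lemma proper_preordering_rat_nonneg:
  assumes M: "proper_preordering M" and q: "frac_of_rat q \<in> M"
  shows "q \<ge> 0"
proof (rule ccontr)
  assume "\<not> q \<ge> 0"
  then have "- 1 / q \<ge> 0"
    by simp
  have pre: "preordering M"
    using M by (simp add: proper_preordering_def)
  have "frac_of_rat (- 1 / q) \<in> M"
    using preordering_nonneg[OF pre] frac_of_rat_in_Bd_nonneg[OF \<open>- 1 / q \<ge> 0\<close>] by (simp add: Bd_nonneg_def)
  then have "frac_mul (frac_of_rat q) (frac_of_rat (- 1 / q)) \<in> M"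
    using preordering_mult[OF pre q] by simp
  moreover have "frac_of_rat (q * (- 1 / q)) = (- 1, 1 :: 'a)"
    using \<open>\<not> q \<ge> 0\<close> frac_of_rat_of_int[of "- 1"] by simp
  ultimately have "(- 1, 1) \<in> M"
    using preordering_congr[OF pre] frac_of_rat_mul Bd_frac_of_rat by metis
  then show False
    using M by (simp add: proper_preordering_def)
qed

definition le_wrt :: "('a \<times> 'a) set \<Rightarrow> 'a \<times> 'a \<Rightarrow> 'a \<times> 'a \<Rightarrow> bool" where
  "le_wrt M x y \<longleftrightarrow> frac_diff y x \<in> M"

context
  fixes M assumes pre: "preordering M"
begin

lemma le_wrt_congr:
  assumes "le_wrt M x y" "frac_eq x x'" "frac_eq y y'" "x' \<in> Bd le" "y' \<in> Bd le"
  shows "le_wrt M x' y'"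
  using preordering_congr[OF pre] assms Bd_diff frac_eq_diff unfolding le_wrt_def by blast

lemma le_wrt_trans:
  assumes "le_wrt M x y" "le_wrt M y z" "x \<in> Bd le" "z \<in> Bd le"
  shows "le_wrt M x z"
proof -
  have "frac_eq (frac_add (frac_diff z y) (frac_diff y x)) (frac_diff z x)"
    by (simp add: frac_eq_def frac_diff_def frac_add_def frac_neg_def algebra_simps)
  then show ?thesis
    using assms preordering_add[OF pre] preordering_congr[OF pre] Bd_diff unfolding le_wrt_def by blast
qed

lemma le_wrt_add:
  assumes "le_wrt M a x" "le_wrt M b y" "frac_add x y \<in> Bd le" "frac_add a b \<in> Bd le"
  shows "le_wrt M (frac_add a b) (frac_add x y)"
proof -
  have "frac_eq (frac_add (frac_diff x a) (frac_diff y b)) (frac_diff (frac_add x y) (frac_add a b))"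
    by (simp add: frac_eq_def frac_diff_def frac_add_def frac_neg_def algebra_simps)
  then show ?thesis
    using assms preordering_add[OF pre] preordering_congr[OF pre] Bd_diff unfolding le_wrt_def by blast
qed

lemma le_wrt_mult:
  assumes "a \<in> M" "b \<in> M" "le_wrt M a x" "le_wrt M b y" "frac_mul x y \<in> Bd le" "frac_mul a b \<in> Bd le"
  shows "le_wrt M (frac_mul a b) (frac_mul x y)"
proof -
  have "frac_eq (frac_add (frac_add (frac_mul (frac_diff x a) (frac_diff y b)) (frac_mul a (frac_diff y b)))
      (frac_mul b (frac_diff x a))) (frac_diff (frac_mul x y) (frac_mul a b))"
    by (simp add: frac_eq_def frac_diff_def frac_add_def frac_mul_def frac_neg_def algebra_simps)
  moreover have "frac_add (frac_add (frac_mul (frac_diff x a) (frac_diff y b)) (frac_mul a (frac_diff y b)))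
      (frac_mul b (frac_diff x a)) \<in> M"
    using assms(1-4) preordering_add[OF pre] preordering_mult[OF pre] unfolding le_wrt_def by simp
  ultimately show ?thesis
    using assms(5,6) preordering_congr[OF pre] Bd_diff unfolding le_wrt_def by blast
qed

lemma le_wrt_rat: "p \<le> q \<Longrightarrow> le_wrt M (frac_of_rat p) (frac_of_rat q)"
  using frac_of_rat_in_Bd_nonneg[of "q - p"] preordering_nonneg[OF pre] preordering_congr[OF pre]
    frac_eq_sym[OF frac_of_rat_diff] Bd_diff Bd_frac_of_rat
  unfolding le_wrt_def Bd_nonneg_def by (metis diff_ge_0_iff_ge mem_Collect_eq)

lemma le_wrt_integer_bounds:
  assumes x: "x \<in> Bd le"
  obtains n :: nat where "le_wrt M (frac_of_rat (- of_nat n)) x" "le_wrt M x (frac_of_rat (of_nat n))"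
proof -
  obtain n where n: "nonneg (fst x + of_nat n * snd x)" "nonneg (of_nat n * snd x - fst x)"
    using x unfolding Bd_iff by blast
  have rat_n: "frac_of_rat (- of_nat n) = (- of_nat n, 1 :: 'a)" "frac_of_rat (of_nat n) = (of_nat n, 1 :: 'a)"
    using frac_of_rat_of_int[of "- int n"] by simp_all
  have "frac_diff x (- of_nat n, 1) \<in> Bd le" "frac_diff (of_nat n, 1) x \<in> Bd le"
    using Bd_diff[OF x Bd_frac_of_rat] Bd_diff[OF Bd_frac_of_rat x] unfolding rat_n[symmetric] by blast+
  moreover have "nonneg (fst (frac_diff x (- of_nat n, 1)))" "nonneg (fst (frac_diff (of_nat n, 1) x))"
    using n by (simp_all add: frac_diff_def frac_add_def frac_neg_def)
  ultimately have "le_wrt M (frac_of_rat (- of_nat n)) x" "le_wrt M x (frac_of_rat (of_nat n))"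
    using preordering_nonneg[OF pre] unfolding le_wrt_def rat_n by blast+
  then show thesis
    by (rule that)
qed

end

lemma le_wrt_rat_iff:
  assumes "proper_preordering M"
  shows "le_wrt M (frac_of_rat p) (frac_of_rat q) \<longleftrightarrow> p \<le> q"
proof
  have pre: "preordering M"
    using assms by (simp add: proper_preordering_def)
  show "p \<le> q" if "le_wrt M (frac_of_rat p) (frac_of_rat q)"
  proof -
    have "frac_of_rat (q - p) \<in> M"
      using that preordering_congr[OF pre] frac_of_rat_diff Bd_frac_of_rat unfolding le_wrt_def by blast
    then have "q - p \<ge> 0"
      by (rule proper_preordering_rat_nonneg[OF assms])
    then show ?thesis
      by simp
  qed
  show "le_wrt M (frac_of_rat p) (frac_of_rat q)" if "p \<le> q"
    using le_wrt_rat[OF pre that] .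
qed

text \<open>\<open>c\<close> is the real number represented by \<open>x\<close> modulo \<open>M\<close>: a Dedekind cut against the rationals.\<close>

definition is_cut :: "('a \<times> 'a) set \<Rightarrow> 'a \<times> 'a \<Rightarrow> real \<Rightarrow> bool" where
  "is_cut M x c \<longleftrightarrow>
     (\<forall>q. of_rat q < c \<longrightarrow> le_wrt M (frac_of_rat q) x) \<and> (\<forall>q. c < of_rat q \<longrightarrow> le_wrt M x (frac_of_rat q))"

lemma is_cutD:
  "is_cut M x c \<Longrightarrow> of_rat q < c \<Longrightarrow> le_wrt M (frac_of_rat q) x"
  "is_cut M x c \<Longrightarrow> c < of_rat q \<Longrightarrow> le_wrt M x (frac_of_rat q)"
  unfolding is_cut_def by blast+

context
  fixes M assumes M: "proper_preordering M"
begin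

lemma preordering_M: "preordering M"
  using preordering_if_proper[OF M] .

lemma mem_iff_le_wrt_zero: "x \<in> M \<longleftrightarrow> le_wrt M (0, 1) x"
  by (simp add: le_wrt_def)

lemma is_cut_unique:
  assumes x: "x \<in> Bd le" and "is_cut M x c" "is_cut M x d"
  shows "c = d"
proof -
  have "\<not> c < d" if "is_cut M x c" "is_cut M x d" for c d
  proof
    assume "c < d"
    then obtain p where p: "c < of_rat p" "of_rat p < d"
      using of_rat_dense by blast
    then obtain q where q: "of_rat p < (of_rat q :: real)" "of_rat q < d"
      using of_rat_dense by blast
    have "le_wrt M (frac_of_rat q) (frac_of_rat p)"
      using le_wrt_trans[OF preordering_M is_cutD(1)[OF that(2) q(2)] is_cutD(2)[OF that(1) p(1)]
          Bd_frac_of_rat Bd_frac_of_rat] .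
    then show False
      using q(1) le_wrt_rat_iff[OF M] by (simp add: of_rat_less)
  qed
  from this[OF assms(2,3)] this[OF assms(3,2)] show ?thesis
    by linarith
qed

lemma is_cut_exists:
  assumes total: "\<forall>y\<in>Bd le. y \<in> M \<or> frac_neg y \<in> M" and x: "x \<in> Bd le"
  shows "\<exists>c. is_cut M x c"
proof -
  obtain n where lower: "le_wrt M (frac_of_rat (- of_nat n)) x" and upper: "le_wrt M x (frac_of_rat (of_nat n))"
    by (rule le_wrt_integer_bounds[OF preordering_M x])
  define S where "S = {of_rat q :: real | q. le_wrt M (frac_of_rat q) x}"
  have "of_rat (- of_nat n) \<in> S"
    using lower unfolding S_def by blast
  then have S: "S \<noteq> {}"
    by blast
  have "s \<le> real n" if s: "s \<in> S" for s
  proof -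
    obtain q where q: "s = of_rat q" "le_wrt M (frac_of_rat q) x"
      using s unfolding S_def by blast
    then have "le_wrt M (frac_of_rat q) (frac_of_rat (of_nat n))"
      using le_wrt_trans[OF preordering_M q(2) upper] Bd_frac_of_rat by blast
    then have "q \<le> of_nat n"
      using le_wrt_rat_iff[OF M] by blast
    then show ?thesis
      using q(1) of_rat_less_eq[of q "of_nat n"] by simp
  qed
  then have bdd: "bdd_above S"
    by (rule bdd_aboveI)
  have "is_cut M x (Sup S)"
    unfolding is_cut_def
  proof (intro conjI allI impI)
    fix q assume "of_rat q < Sup S"
    then obtain s where "s \<in> S" "of_rat q < s"
      using less_cSup_iff[OF S bdd] by blast
    then obtain q' where q': "of_rat q < (of_rat q' :: real)" "le_wrt M (frac_of_rat q') x"
      unfolding S_def by blast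
    then have "q \<le> q'"
      by (simp add: of_rat_less)
    then show "le_wrt M (frac_of_rat q) x"
      using le_wrt_trans[OF preordering_M le_wrt_rat[OF preordering_M] q'(2) Bd_frac_of_rat x] by blast
  next
    fix q assume q: "Sup S < of_rat q"
    have "\<not> le_wrt M (frac_of_rat q) x"
    proof
      assume "le_wrt M (frac_of_rat q) x"
      then have "of_rat q \<in> S"
        unfolding S_def by blast
      then show False
        using cSup_upper[OF _ bdd] q by fastforce
    qed
    then have "frac_neg (frac_diff x (frac_of_rat q)) \<in> M"
      using total Bd_diff[OF x Bd_frac_of_rat] unfolding le_wrt_def by blast
    then show "le_wrt M x (frac_of_rat q)"
      using preordering_congr[OF preordering_M _ Bd_diff[OF Bd_frac_of_rat x] frac_neg_diff]
      unfolding le_wrt_def by blast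
  qed
  then show ?thesis
    by blast
qed

lemma is_cut_congr:
  assumes "is_cut M x c" "frac_eq x y" "y \<in> Bd le"
  shows "is_cut M y c"
  unfolding is_cut_def
proof (intro conjI allI impI)
  fix q
  show "le_wrt M (frac_of_rat q) y" if "of_rat q < c"
    using le_wrt_congr[OF preordering_M is_cutD(1)[OF assms(1) that] frac_eq_refl assms(2) Bd_frac_of_rat assms(3)] .
  show "le_wrt M y (frac_of_rat q)" if "c < of_rat q"
    using le_wrt_congr[OF preordering_M is_cutD(2)[OF assms(1) that] assms(2) frac_eq_refl assms(3) Bd_frac_of_rat] .
qed

lemma is_cut_rat: "is_cut M (frac_of_rat q) (of_rat q)"
  unfolding is_cut_def of_rat_less using le_wrt_rat[OF preordering_M] less_imp_le by blast

lemma is_cut_add: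
  assumes a: "is_cut M x a" and b: "is_cut M y b" and xy: "x \<in> Bd le" "y \<in> Bd le"
  shows "is_cut M (frac_add x y) (a + b)"
  unfolding is_cut_def
proof (intro conjI allI impI)
  have B: "frac_add x y \<in> Bd le" "frac_add (frac_of_rat p) (frac_of_rat p') \<in> Bd le" for p p'
    using xy by (simp_all add: Bd_add Bd_frac_of_rat)
  fix q
  assume "of_rat q < a + b"
  then obtain p where p: "of_rat q - b < of_rat p" "of_rat p < a"
    using of_rat_dense[of "of_rat q - b" a] by auto
  have "le_wrt M (frac_of_rat p) x" "le_wrt M (frac_of_rat (q - p)) y"
    using is_cutD(1)[OF a p(2)] is_cutD(1)[OF b, of "q - p"] p(1) by (simp_all add: of_rat_diff)
  then have "le_wrt M (frac_add (frac_of_rat p) (frac_of_rat (q - p))) (frac_add x y)"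
    using le_wrt_add[OF preordering_M] B by blast
  then show "le_wrt M (frac_of_rat q) (frac_add x y)"
    using le_wrt_congr[OF preordering_M _ frac_of_rat_add[of p "q - p"] frac_eq_refl Bd_frac_of_rat B(1)] by simp
next
  have B: "frac_add x y \<in> Bd le" "frac_add (frac_of_rat p) (frac_of_rat p') \<in> Bd le" for p p'
    using xy by (simp_all add: Bd_add Bd_frac_of_rat)
  fix q
  assume "a + b < of_rat q"
  then obtain p where p: "a < of_rat p" "of_rat p < of_rat q - b"
    using of_rat_dense[of a "of_rat q - b"] by auto
  have "le_wrt M x (frac_of_rat p)" "le_wrt M y (frac_of_rat (q - p))"
    using is_cutD(2)[OF a p(1)] is_cutD(2)[OF b, of "q - p"] p(2) by (simp_all add: of_rat_diff)
  then have "le_wrt M (frac_add x y) (frac_add (frac_of_rat p) (frac_of_rat (q - p)))"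
    using le_wrt_add[OF preordering_M] B by blast
  then show "le_wrt M (frac_add x y) (frac_of_rat q)"
    using le_wrt_congr[OF preordering_M _ frac_eq_refl frac_of_rat_add[of p "q - p"] B(1) Bd_frac_of_rat] by simp
qed

lemma is_cut_nonneg:
  assumes "is_cut M x c" "x \<in> M"
  shows "c \<ge> 0"
proof (rule ccontr)
  assume "\<not> c \<ge> 0"
  then obtain q where q: "c < of_rat q" "of_rat q < (0::real)"
    using of_rat_dense[of c 0] by auto
  have "le_wrt M (0, 1) x"
    using assms(2) mem_iff_le_wrt_zero by blast
  then have "le_wrt M (0, 1) (frac_of_rat q)"
    using le_wrt_trans[OF preordering_M _ is_cutD(2)[OF assms(1) q(1)] Bd_0 Bd_frac_of_rat] by blast
  then show False
    using q(2) le_wrt_rat_iff[OF M, of 0 q] by simp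
qed

lemma mem_if_is_cut_pos:
  assumes "is_cut M x c" "c > 0" "x \<in> Bd le"
  shows "x \<in> M"
proof -
  obtain q where "0 < (of_rat q :: real)" "of_rat q < c"
    using of_rat_dense[OF assms(2)] by blast
  then have q: "0 < q" "of_rat q < c"
    by simp_all
  have "le_wrt M (0, 1) (frac_of_rat q)"
    using q(1) le_wrt_rat[OF preordering_M, of 0 q] by simp
  then have "le_wrt M (0, 1) x"
    using le_wrt_trans[OF preordering_M _ is_cutD(1)[OF assms(1) q(2)] Bd_0 assms(3)] by blast
  then show ?thesis
    using mem_iff_le_wrt_zero by blast
qed

lemma is_cut_mult_pos_lower:
  assumes a: "is_cut M x a" and b: "is_cut M y b" and xy: "x \<in> Bd le" "y \<in> Bd le"
    and pos: "a > 0" "b > 0" and q: "of_rat q < a * b"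
  shows "le_wrt M (frac_of_rat q) (frac_mul x y)"
proof -
  have B: "frac_mul x y \<in> Bd le" "frac_mul (frac_of_rat p) (frac_of_rat p') \<in> Bd le" for p p'
    using xy by (simp_all add: Bd_mul Bd_frac_of_rat)
  obtain p1 p2 where p: "0 < p1" "of_rat p1 < a" "0 < p2" "of_rat p2 < b"
    "of_rat q < of_rat p1 * (of_rat p2 :: real)"
    by (rule rat_factors_below[OF pos q])
  have "frac_of_rat p1 \<in> M" "frac_of_rat p2 \<in> M"
    using p(1,3) mem_iff_le_wrt_zero le_wrt_rat[OF preordering_M, of 0 p1] le_wrt_rat[OF preordering_M, of 0 p2]
    by simp_all
  then have "le_wrt M (frac_mul (frac_of_rat p1) (frac_of_rat p2)) (frac_mul x y)"
    using le_wrt_mult[OF preordering_M] is_cutD(1)[OF a p(2)] is_cutD(1)[OF b p(4)] B by blast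
  then have "le_wrt M (frac_of_rat (p1 * p2)) (frac_mul x y)"
    using le_wrt_congr[OF preordering_M _ frac_of_rat_mul frac_eq_refl Bd_frac_of_rat B(1)] by simp
  moreover have "of_rat q < (of_rat (p1 * p2) :: real)"
    using p(5) by (simp add: of_rat_mult)
  then have "le_wrt M (frac_of_rat q) (frac_of_rat (p1 * p2))"
    using le_wrt_rat[OF preordering_M] by (simp add: of_rat_less)
  ultimately show ?thesis
    using le_wrt_trans[OF preordering_M] Bd_frac_of_rat B(1) by blast
qed

lemma is_cut_mult_pos_upper:
  assumes a: "is_cut M x a" and b: "is_cut M y b" and xy: "x \<in> Bd le" "y \<in> Bd le"
    and pos: "a > 0" "b > 0" and q: "a * b < of_rat q"
  shows "le_wrt M (frac_mul x y) (frac_of_rat q)"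
proof -
  have B: "frac_mul x y \<in> Bd le" "frac_mul (frac_of_rat p) (frac_of_rat p') \<in> Bd le" for p p'
    using xy by (simp_all add: Bd_mul Bd_frac_of_rat)
  obtain p1 p2 where p: "a < of_rat p1" "b < of_rat p2" "of_rat p1 * of_rat p2 < (of_rat q :: real)"
    by (rule rat_factors_above[OF pos q])
  have "x \<in> M" "y \<in> M"
    using mem_if_is_cut_pos a b pos xy by blast+
  then have "le_wrt M (frac_mul x y) (frac_mul (frac_of_rat p1) (frac_of_rat p2))"
    using le_wrt_mult[OF preordering_M] is_cutD(2)[OF a p(1)] is_cutD(2)[OF b p(2)] B by blast
  then have "le_wrt M (frac_mul x y) (frac_of_rat (p1 * p2))"
    using le_wrt_congr[OF preordering_M _ frac_eq_refl frac_of_rat_mul B(1) Bd_frac_of_rat] by simp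
  moreover have "of_rat (p1 * p2) < (of_rat q :: real)"
    using p(3) by (simp add: of_rat_mult)
  then have "le_wrt M (frac_of_rat (p1 * p2)) (frac_of_rat q)"
    using le_wrt_rat[OF preordering_M] by (simp add: of_rat_less)
  ultimately show ?thesis
    using le_wrt_trans[OF preordering_M] Bd_frac_of_rat B(1) by blast
qed

lemma is_cut_mult_pos:
  assumes a: "is_cut M x a" and b: "is_cut M y b" and xy: "x \<in> Bd le" "y \<in> Bd le"
    and pos: "a > 0" "b > 0"
  shows "is_cut M (frac_mul x y) (a * b)"
  unfolding is_cut_def using is_cut_mult_pos_lower[OF assms] is_cut_mult_pos_upper[OF assms] by blast

end

definition cut_character :: "('a \<times> 'a) set \<Rightarrow> 'a \<times> 'a \<Rightarrow> real" where
  "cut_character M x = (if x \<in> Bd le then THE c. is_cut M x c else 0)"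

context
  fixes M assumes M: "proper_preordering M"
    and total: "\<forall>y\<in>Bd le. y \<in> M \<or> frac_neg y \<in> M"
begin

lemma is_cut_cut_character: "x \<in> Bd le \<Longrightarrow> is_cut M x (cut_character M x)"
proof -
  assume x: "x \<in> Bd le"
  then have "\<exists>!c. is_cut M x c"
    using is_cut_exists[OF M total x] is_cut_unique[OF M x] by blast
  then show ?thesis
    using x unfolding cut_character_def by (simp add: theI')
qed

lemma cut_character_eqI: "x \<in> Bd le \<Longrightarrow> is_cut M x c \<Longrightarrow> cut_character M x = c"
  using is_cut_unique[OF M] is_cut_cut_character by blast

lemma cut_character_congr:
  "x \<in> Bd le \<Longrightarrow> y \<in> Bd le \<Longrightarrow> frac_eq x y \<Longrightarrow> cut_character M x = cut_character M y"
  using cut_character_eqI is_cut_congr[OF M is_cut_cut_character] by metis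

lemma cut_character_rat: "cut_character M (frac_of_rat q) = of_rat q"
  by (rule cut_character_eqI[OF Bd_frac_of_rat is_cut_rat[OF M]])

lemma cut_character_add:
  "x \<in> Bd le \<Longrightarrow> y \<in> Bd le \<Longrightarrow> cut_character M (frac_add x y) = cut_character M x + cut_character M y"
  by (rule cut_character_eqI[OF Bd_add is_cut_add[OF M is_cut_cut_character is_cut_cut_character]])

lemma cut_character_mult_pos:
  "x \<in> Bd le \<Longrightarrow> y \<in> Bd le \<Longrightarrow> cut_character M x > 0 \<Longrightarrow> cut_character M y > 0 \<Longrightarrow>
    cut_character M (frac_mul x y) = cut_character M x * cut_character M y"
  by (rule cut_character_eqI[OF Bd_mul is_cut_mult_pos[OF M is_cut_cut_character is_cut_cut_character]])

text \<open>Shifting by an integer \<open>k\<close> makes both factors positive: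
  \<open>(x + k)(y + k) + k k = x y + k (x + k) + k (y + k)\<close>.\<close>

lemma cut_character_mult:
  assumes x: "x \<in> Bd le" and y: "y \<in> Bd le"
  shows "cut_character M (frac_mul x y) = cut_character M x * cut_character M y"
proof -
  let ?\<phi> = "cut_character M"
  define k where "k = nat \<lceil>\<bar>?\<phi> x\<bar> + \<bar>?\<phi> y\<bar>\<rceil> + 1"
  let ?K = "(of_nat k, 1) :: 'a \<times> 'a"
  have K: "?K \<in> Bd le" "?\<phi> ?K = real k"
    using Bd_of_nat cut_character_rat[of "of_nat k"] by simp_all
  have pos: "?\<phi> x + real k > 0" "?\<phi> y + real k > 0" "real k > 0"
    unfolding k_def by linarith+
  let ?x = "frac_add x ?K" and ?y = "frac_add y ?K"
  have B: "?x \<in> Bd le" "?y \<in> Bd le"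
    using x y K(1) by (simp_all add: Bd_add)
  have \<phi>: "?\<phi> ?x = ?\<phi> x + real k" "?\<phi> ?y = ?\<phi> y + real k"
    using cut_character_add[OF x K(1)] cut_character_add[OF y K(1)] K(2) by simp_all
  have "frac_eq (frac_add (frac_mul ?x ?y) (frac_mul ?K ?K)) (frac_add (frac_mul x y) (frac_add (frac_mul ?K ?x) (frac_mul ?K ?y)))"
    by (simp add: frac_eq_def frac_add_def frac_mul_def algebra_simps)
  then have "?\<phi> (frac_add (frac_mul ?x ?y) (frac_mul ?K ?K)) = ?\<phi> (frac_add (frac_mul x y) (frac_add (frac_mul ?K ?x) (frac_mul ?K ?y)))"
    using B K(1) x y by (intro cut_character_congr) (simp_all add: Bd_add Bd_mul)
  then have "(?\<phi> x + real k) * (?\<phi> y + real k) + real k * real k =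
      ?\<phi> (frac_mul x y) + (real k * (?\<phi> x + real k) + real k * (?\<phi> y + real k))"
    using B K x y pos \<phi> by (simp add: Bd_mul Bd_add cut_character_add cut_character_mult_pos)
  then show ?thesis
    by (simp add: algebra_simps)
qed

lemma cut_character_in_Kset: "cut_character M \<in> Kset le"
proof -
  have nonneg: "cut_character M x \<ge> 0" if "x \<in> Bd le" "nonneg (fst x)" for x
    using is_cut_nonneg[OF M is_cut_cut_character[OF that(1)]] preordering_nonneg[OF preordering_M[OF M] that] .
  have "cut_character M (1, 1) = 1"
    using cut_character_rat[of 1] by simp
  then show ?thesis
    unfolding Kset_def frac_le_def
    using nonneg cut_character_congr cut_character_add cut_character_mult by (simp add: cut_character_def)
qed

lemma cut_character_nonneg: "x \<in> M \<Longrightarrow> cut_character M x \<ge> 0"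
  using is_cut_nonneg[OF M is_cut_cut_character] preordering_Bd[OF preordering_M[OF M]] by blast

end

theorem nonneg_if_Kset_nonneg:
  assumes ru: "(r, u) \<in> Bd le" and Kset_nonneg: "\<forall>\<phi>\<in>Kset le. \<phi> (r, u) \<ge> 0" and n: "n \<ge> 1"
  shows "nonneg (of_nat n * r + u)"
proof (rule ccontr)
  assume not_nonneg: "\<not> nonneg (of_nat n * r + u)"
  define f where "f = frac_add (r, u) (1, of_nat n)"
  have n_Loc: "(1, of_nat n) \<in> Bd le"
    using Bd_one_Loc of_nat_in_Loc n by simp
  have f: "f \<in> Bd le"
    unfolding f_def using ru n_Loc by (rule Bd_add)
  have "fst f = of_nat n * r + u"
    by (simp add: f_def frac_add_def algebra_simps)
  then have "(- 1, 1) \<notin> adjoin Bd_nonneg (frac_neg f)"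
    using nonneg_if_minus_one_in_adjoin_neg[OF f] not_nonneg by auto
  then have "proper_preordering (adjoin Bd_nonneg (frac_neg f))"
    using preordering_adjoin[OF preordering_Bd_nonneg Bd_neg[OF f]] by (simp add: proper_preordering_def)
  then obtain M where M: "proper_preordering M" "adjoin Bd_nonneg (frac_neg f) \<subseteq> M"
    "\<And>Q. proper_preordering Q \<Longrightarrow> M \<subseteq> Q \<Longrightarrow> Q = M"
    by (rule maximal_proper_preordering) blast
  have total: "\<forall>y\<in>Bd le. y \<in> M \<or> frac_neg y \<in> M"
    using maximal_preordering_total[OF M(1) M(3)] by blast
  have "frac_neg f \<in> M"
    using M(2) mem_adjoin[OF preordering_Bd_nonneg Bd_neg[OF f]] by blast
  then have "cut_character M (frac_neg f) \<ge> 0"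
    by (rule cut_character_nonneg[OF M(1) total])
  moreover have K: "cut_character M \<in> Kset le"
    by (rule cut_character_in_Kset[OF M(1) total])
  then have "cut_character M (frac_neg f) = - (cut_character M (r, u) + 1 / real n)"
    using Kset_neg[OF K f] Kset_add[OF K ru n_Loc] Kset_inverse_of_nat[OF K n] by (simp add: f_def)
  moreover have "cut_character M (r, u) \<ge> 0"
    using Kset_nonneg K by blast
  moreover have "1 / real n > 0"
    using n by simp
  ultimately show False
    by linarith
qed

end

section \<open>Positivity of the extended Gelfand transform\<close>

context nat_localizing_ring
begin

lemma Kset_mult_nonneg_if_ddagger:
  assumes \<phi>: "\<phi> \<in> Kset le" and rs: "(r, s) \<in> Bd le" and ht: "(h, t) \<in> Bd le"
    and h: "\<And>k::nat. k \<ge> 1 \<Longrightarrow> nonneg (of_nat k * r + h)"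
  shows "\<phi> (r, s) * \<phi> (1, t) \<ge> 0"
proof (rule nonneg_if_nat_mult_add_nonneg)
  fix k :: nat
  assume k: "k \<ge> 1"
  have Loc: "s \<in> Loc le" "t \<in> Loc le"
    using rs ht Bd_Loc by force+
  have B: "frac_mul (r, s) (1, t) \<in> Bd le" "frac_mul (1, s) (h, t) \<in> Bd le" "(1, s) \<in> Bd le" "(1, t) \<in> Bd le"
    using Bd_mul rs ht Bd_one_Loc Loc by blast+
  define z where "z = frac_add (frac_mul (of_nat k, 1) (frac_mul (r, s) (1, t))) (frac_mul (1, s) (h, t))"
  have "fst z = (of_nat k * r + h) * (s * t)"
    by (simp add: z_def frac_add_def frac_mul_def algebra_simps)
  then have "\<phi> z \<ge> 0"
    using Kset_nonneg[OF \<phi>] Bd_add[OF Bd_mul[OF Bd_of_nat B(1)] B(2)]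
      nonneg_mult[OF h[OF k] Loc_nonneg[OF Loc_mult[OF Loc]]]
    unfolding z_def by simp
  moreover have "\<phi> z = real k * (\<phi> (r, s) * \<phi> (1, t)) + \<phi> (1, s) * \<phi> (h, t)"
    unfolding z_def
    using Kset_add[OF \<phi> Bd_mul[OF Bd_of_nat B(1)] B(2)] Kset_mult[OF \<phi> Bd_of_nat B(1)]
      Kset_mult[OF \<phi> rs B(4)] Kset_mult[OF \<phi> B(3) ht] Kset_of_nat[OF \<phi>]
    by simp
  ultimately show "real k * (\<phi> (r, s) * \<phi> (1, t)) + \<phi> (1, s) * \<phi> (h, t) \<ge> 0"
    by simp
qed

context
  assumes localizable: "localizable le"
begin

lemma gelfand_s: "gelfand_s le r \<in> Loc le" "(r, gelfand_s le r) \<in> Bd le"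
proof -
  obtain s where "s \<in> Loc le" "le (- s) r" "le r s"
    using localizable unfolding localizable_def by blast
  then have "\<exists>s. s \<in> Loc le \<and> (r, s) \<in> Bd le"
    using Bd_if_bounded_by_Loc by blast
  then show "gelfand_s le r \<in> Loc le" "(r, gelfand_s le r) \<in> Bd le"
    unfolding gelfand_s_def by (metis (mono_tags, lifting) someI_ex)+
qed

lemma gelfand_nonneg_iff_Ofin:
  "gelfand_nonneg le r \<longleftrightarrow> (\<exists>t\<in>Loc le. Ofin le t \<subseteq> Ofin le (gelfand_s le r) \<and>
     (\<forall>\<phi>\<in>Ofin le t. \<phi> (r, gelfand_s le r) \<ge> 0))"
proof -
  have "inverse (\<phi> (1, gelfand_s le r)) * \<phi> (r, gelfand_s le r) \<ge> 0 \<longleftrightarrow> \<phi> (r, gelfand_s le r) \<ge> 0"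
    if "\<phi> \<in> Ofin le (gelfand_s le r)" for \<phi>
    using that by (simp add: Ofin_def zero_le_mult_iff)
  then show ?thesis
    unfolding gelfand_nonneg_def C_approx_nonneg_def Dloc_def gelfand_fun_def by blast
qed

lemma ddagger_pos_if_gelfand_nonneg:
  assumes "gelfand_nonneg le r"
  shows "r \<in> ddagger_pos le"
proof -
  let ?s = "gelfand_s le r"
  obtain t where t: "t \<in> Loc le" "Ofin le t \<subseteq> Ofin le ?s" "\<And>\<phi>. \<phi> \<in> Ofin le t \<Longrightarrow> \<phi> (r, ?s) \<ge> 0"
    using assms gelfand_nonneg_iff_Ofin by blast
  have rst: "(r, ?s * t) \<in> Bd le"
    using Bd_mul[OF gelfand_s(2) Bd_one_Loc[OF t(1)]] by (simp add: frac_mul_def)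
  have "\<phi> (r, ?s * t) \<ge> 0" if \<phi>: "\<phi> \<in> Kset le" for \<phi>
  proof (cases "\<phi> (1, t) > 0")
    case True
    then have "\<phi> (r, ?s) \<ge> 0"
      using t \<phi> by (simp add: Ofin_def)
    then show ?thesis
      using True Kset_mult_one_Loc[OF \<phi> gelfand_s(2) t(1)] by simp
  next
    case False
    then have "\<phi> (1, t) = 0"
      using Kset_one_Loc_nonneg[OF \<phi> t(1)] by simp
    then show ?thesis
      using Kset_mult_one_Loc[OF \<phi> gelfand_s(2) t(1)] by simp
  qed
  then have "nonneg (of_nat k * r + ?s * t)" if "k \<ge> 1" for k
    using nonneg_if_Kset_nonneg[OF rst _ that] by blast
  then show ?thesis
    unfolding ddagger_pos_def by blast
qed

lemma gelfand_nonneg_if_ddagger_pos: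
  assumes "r \<in> ddagger_pos le"
  shows "gelfand_nonneg le r"
proof -
  let ?s = "gelfand_s le r"
  obtain h where h: "\<And>k::nat. k \<ge> 1 \<Longrightarrow> nonneg (of_nat k * r + h)"
    using assms unfolding ddagger_pos_def by blast
  obtain t where t: "t \<in> Loc le" "le (- t) h" "le h t"
    using localizable unfolding localizable_def by blast
  have ht: "(h, t) \<in> Bd le"
    using Bd_if_bounded_by_Loc[OF t] .
  have Bd_one: "(1, ?s) \<in> Bd le"
    using Bd_one_Loc gelfand_s(1) by simp
  have "\<phi> \<in> Ofin le ?s \<and> \<phi> (r, ?s) \<ge> 0" if "\<phi> \<in> Ofin le (?s * t)" for \<phi>
  proof -
    have \<phi>: "\<phi> \<in> Kset le" and "\<phi> (1, ?s * t) > 0"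
      using that by (simp_all add: Ofin_def)
    moreover have "\<phi> (1, ?s * t) = \<phi> (1, ?s) * \<phi> (1, t)"
      using Kset_mult_one_Loc[OF \<phi> Bd_one t(1)] .
    moreover have "\<phi> (1, ?s) \<ge> 0" "\<phi> (1, t) \<ge> 0"
      using Kset_one_Loc_nonneg[OF \<phi>] gelfand_s(1) t(1) by simp_all
    ultimately have "\<phi> (1, ?s) > 0" "\<phi> (1, t) > 0"
      by (simp_all add: zero_less_mult_iff)
    moreover have "\<phi> (r, ?s) * \<phi> (1, t) \<ge> 0"
      by (rule Kset_mult_nonneg_if_ddagger[OF \<phi> gelfand_s(2) ht h])
    ultimately show ?thesis
      using \<phi> by (simp add: Ofin_def zero_le_mult_iff)
  qed
  then show ?thesis
    using gelfand_nonneg_iff_Ofin Loc_mult[OF gelfand_s(1) t(1)] by blast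
qed

end

end

theorem theorem27:
  fixes le :: "'a::comm_ring_1 \<Rightarrow> 'a \<Rightarrow> bool"
  assumes "po_comm_ring le"
    and "localizable le"
    and "\<forall>n::nat. n \<ge> 1 \<longrightarrow> of_nat n \<in> Loc le"
  shows "compact_space (Ktop le) \<and> Hausdorff_space (Ktop le) \<and>
         {r. gelfand_nonneg le r} = ddagger_pos le"
proof -
  interpret nat_localizing_ring le
    using assms(1,3) by (simp add: nat_localizing_ring_def nat_localizing_ring_axioms_def po_ring_def)
  have "{r. gelfand_nonneg le r} = ddagger_pos le"
    using ddagger_pos_if_gelfand_nonneg[OF assms(2)] gelfand_nonneg_if_ddagger_pos[OF assms(2)] by blast
  with compact_Hausdorff_Ktop show ?thesis
    by blast
qed

end
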